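(* Assume $1-1/\gamma<\beta<1$. Then for every $b\ge2$, $$\lim_{N\to\infty}\log(N)\,\mathbb E\Big[\sum_{k=2}^N(\eta^N_k)^b\Big]=0.$$
   Context: Fix $\gamma>1$, $\beta\in(0,1)$. $\Xi$ is a Poisson point process on $(0,\infty)$ with intensity $x^{-2}dx$ and atoms $w_1>w_2>\cdots$. Conditionally on $\Xi$, $I^N=(I^N_1,\dots,I^N_N)$ are $N$ indices sampled without replacement from $\{1,\dots,\lceil N^\gamma\rceil\}$ with weights $w_i^\beta$ (each successive draw picks a not-yet-drawn index $i$ with probability proportional to $w_i^\beta$ among the not-yet-drawn ones). Let $\hat I^N$ be the rearrangement with $w_{\hat I^N_1}>\dots>w_{\hat I^N_N}$ and $\eta^N_i=w_{\hat I^N_i}/\sum_{k=1}^N w_{I^N_k}$. *)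

theory Defs
  imports "HOL-Probability.Probability"
begin

definition ppp_intensity :: "real set \<Rightarrow> ennreal" where
  "ppp_intensity A = (\<integral>\<^sup>+ x. ennreal (1 / x\<^sup>2) * indicator A x \<partial>lborel)"

definition ppp_count :: "(nat \<Rightarrow> real) \<Rightarrow> real set \<Rightarrow> nat" where
  "ppp_count w A = card {i. w i \<in> A}"

text \<open>The random sequence w (defined on the probability space M), with
  w 0 > w 1 > ... > 0, enumerates the atoms of a Poisson point process on (0,oo)
  with intensity x^(-2) dx: for pairwise disjoint Borel sets A_0,...,A_(n-1) in
  (0,oo) of finite intensity, the counts are independent and Poisson distributed
  with means the intensities.\<close>
definition is_ppp_atoms :: "'a measure \<Rightarrow> ('a \<Rightarrow> nat \<Rightarrow> real) \<Rightarrow> bool" where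
  "is_ppp_atoms M w \<longleftrightarrow>
     prob_space M \<and>
     (\<forall>i. (\<lambda>\<omega>. w \<omega> i) \<in> borel_measurable M) \<and>
     (\<forall>\<omega>\<in>space M. (\<forall>i j. i < j \<longrightarrow> w \<omega> j < w \<omega> i) \<and> (\<forall>i. 0 < w \<omega> i)) \<and>
     (\<forall>(n::nat) (A :: nat \<Rightarrow> real set).
        (\<forall>k<n. A k \<in> sets borel \<and> A k \<subseteq> {0<..} \<and> ppp_intensity (A k) < \<infinity>) \<and>
        disjoint_family_on A {..<n} \<longrightarrow>
        prob_space.indep_vars M (\<lambda>_. count_space UNIV)
           (\<lambda>k \<omega>. ppp_count (w \<omega>) (A k)) {..<n} \<and>
        (\<forall>k<n. \<forall>j::nat.
           measure M {\<omega>\<in>space M. ppp_count (w \<omega>) (A k) = j} =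
           enn2real (ppp_intensity (A k)) ^ j / fact j * exp (- enn2real (ppp_intensity (A k)))))"

definition n_avail :: "real \<Rightarrow> nat \<Rightarrow> nat" where
  "n_avail \<gamma> N = nat \<lceil>real N powr \<gamma>\<rceil>"

definition draws :: "nat \<Rightarrow> nat \<Rightarrow> nat list set" where
  "draws m N = {xs. distinct xs \<and> set xs \<subseteq> {..<m} \<and> length xs = N}"

text \<open>Probability (given the weights w) of drawing the ordered list xs, each
  successive draw choosing a not-yet-drawn index i in {0..<m} with probability
  proportional to (w i) powr beta.\<close>
definition draw_prob :: "real \<Rightarrow> (nat \<Rightarrow> real) \<Rightarrow> nat \<Rightarrow> nat list \<Rightarrow> real" where
  "draw_prob \<beta> w m xs =
     (\<Prod>k<length xs. w (xs ! k) powr \<beta> /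
        (\<Sum>j\<in>{..<m} - set (take k xs). w j powr \<beta>))"

definition hatI :: "(nat \<Rightarrow> real) \<Rightarrow> nat list \<Rightarrow> nat list" where
  "hatI w xs = rev (sort_key w xs)"

definition eta :: "(nat \<Rightarrow> real) \<Rightarrow> nat list \<Rightarrow> nat \<Rightarrow> real" where
  "eta w xs k = w (hatI w xs ! (k - 1)) / (\<Sum>i<length xs. w (xs ! i))"

definition cond_exp_eta :: "real \<Rightarrow> real \<Rightarrow> real \<Rightarrow> (nat \<Rightarrow> real) \<Rightarrow> nat \<Rightarrow> real" where
  "cond_exp_eta \<gamma> \<beta> b w N =
     (\<Sum>xs\<in>draws (n_avail \<gamma> N) N.
        draw_prob \<beta> w (n_avail \<gamma> N) xs * (\<Sum>k=2..N. eta w xs k powr b))"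

end

theory Submission
  imports Defs "HOL-Real_Asymp.Real_Asymp"
begin

text \<open>Given the atoms, the tail \<Sum>k\<ge>2 \<eta>_k^b is at most 1 and at most \<Sum>j\<ge>1 w_j^2 / S^2, where S is the
  total drawn weight. For a typical Poisson configuration w_0 \<le> (ln N)^2, w_j \<le> 2A/j with
  A = e (ln N)^(2/5), and w_j > 1/(8j) for N^(\<epsilon>/2) \<le> j < N^\<epsilon>. Then the N^\<epsilon> heaviest indices are
  all drawn except with probability at most N^\<epsilon> exp(-c N^\<kappa> / polylog N), where
  \<kappa> = 1 - \<epsilon> \<beta> - \<gamma> (1 - \<beta>) > 0, and once they are drawn S \<ge> \<epsilon> ln N / 16, so the squares beyond
  w_1 contribute O((ln N)^(-6/5)). The term w_1^2 / S^2 is split according to the layer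
  e^k < w_1 \<le> e^(k+1), which has probability at most e^(-2k)/2. Atypical configurations have
  probability o(1 / ln N) by Poisson tail bounds.\<close>

section \<open>Sampling without replacement\<close>

definition remaining_weight :: "real \<Rightarrow> (nat \<Rightarrow> real) \<Rightarrow> nat \<Rightarrow> nat list \<Rightarrow> real" where
  "remaining_weight \<beta> w m xs = (\<Sum>j\<in>{..<m} - set xs. w j powr \<beta>)"

lemma draw_prob_snoc:
  "draw_prob \<beta> w m (xs @ [x]) = draw_prob \<beta> w m xs * (w x powr \<beta> / remaining_weight \<beta> w m xs)"
  unfolding draw_prob_def remaining_weight_def
  by (simp add: lessThan_Suc nth_append mult.commute)

lemma draw_prob_nonneg: "draw_prob \<beta> w m xs \<ge> 0"
  unfolding draw_prob_def by (intro prod_nonneg divide_nonneg_nonneg sum_nonneg) auto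

lemma finite_draws: "finite (draws m n)"
proof (rule finite_subset)
  show "draws m n \<subseteq> {xs. set xs \<subseteq> {..<m} \<and> length xs = n}" by (auto simp: draws_def)
qed (rule finite_lists_length_eq, simp)

lemma draws_Suc:
  "draws m (Suc n) = (\<lambda>(xs, x). xs @ [x]) ` (SIGMA xs:draws m n. {..<m} - set xs)"
proof
  show "draws m (Suc n) \<subseteq> (\<lambda>(xs, x). xs @ [x]) ` (SIGMA xs:draws m n. {..<m} - set xs)"
  proof
    fix ys assume ys: "ys \<in> draws m (Suc n)"
    then have "ys \<noteq> []" by (auto simp: draws_def)
    then obtain xs x where ys_eq: "ys = xs @ [x]" by (metis rev_exhaust)
    then have "(xs, x) \<in> (SIGMA xs:draws m n. {..<m} - set xs)"
      using ys by (auto simp: draws_def)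
    then show "ys \<in> (\<lambda>(xs, x). xs @ [x]) ` (SIGMA xs:draws m n. {..<m} - set xs)"
      unfolding ys_eq by force
  qed
qed (auto simp: draws_def)

lemma sum_draws_Suc:
  "(\<Sum>ys\<in>draws m (Suc n). f ys) = (\<Sum>xs\<in>draws m n. \<Sum>x\<in>{..<m} - set xs. f (xs @ [x]))"
proof -
  have "inj_on (\<lambda>(xs, x). xs @ [x]) (SIGMA xs:draws m n. {..<m} - set xs)"
    by (auto simp: inj_on_def)
  then have "(\<Sum>ys\<in>draws m (Suc n). f ys)
      = (\<Sum>(xs, x)\<in>(SIGMA xs:draws m n. {..<m} - set xs). f (xs @ [x]))"
    unfolding draws_Suc by (simp add: sum.reindex split_def)
  also have "\<dots> = (\<Sum>xs\<in>draws m n. \<Sum>x\<in>{..<m} - set xs. f (xs @ [x]))"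
    by (rule sum.Sigma[symmetric]) (auto simp: finite_draws)
  finally show ?thesis .
qed

lemma remaining_weight_pos:
  assumes pos: "\<And>i. 0 < w i" and xs: "xs \<in> draws m n" and "n < m"
  shows "remaining_weight \<beta> w m xs > 0"
proof -
  have "card (set xs) = n" using xs by (auto simp: draws_def distinct_card)
  then have "\<not> {..<m} \<subseteq> set xs" using \<open>n < m\<close> by (metis card_lessThan card_mono finite_set not_le)
  moreover have "\<And>j. 0 < w j powr \<beta>" using pos by (metis powr_gt_zero less_irrefl)
  ultimately show ?thesis unfolding remaining_weight_def by (intro sum_pos) auto
qed

lemma sum_draw_prob:
  assumes pos: "\<And>i. 0 < w i" and "n \<le> m"
  shows "(\<Sum>xs\<in>draws m n. draw_prob \<beta> w m xs) = 1"
  using \<open>n \<le> m\<close>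
proof (induction n)
  case 0
  have "draws m 0 = {[]}" by (auto simp: draws_def)
  then show ?case by (simp add: draw_prob_def)
next
  case (Suc n)
  have "(\<Sum>ys\<in>draws m (Suc n). draw_prob \<beta> w m ys)
      = (\<Sum>xs\<in>draws m n. draw_prob \<beta> w m xs
           * ((\<Sum>x\<in>{..<m} - set xs. w x powr \<beta>) / remaining_weight \<beta> w m xs))"
    unfolding sum_draws_Suc draw_prob_snoc by (simp add: sum_distrib_left sum_divide_distrib)
  also have "\<dots> = (\<Sum>xs\<in>draws m n. draw_prob \<beta> w m xs)"
  proof (rule sum.cong)
    fix xs assume "xs \<in> draws m n"
    then have "remaining_weight \<beta> w m xs > 0" using remaining_weight_pos pos Suc.prems by auto
    then show "draw_prob \<beta> w m xs * ((\<Sum>x\<in>{..<m} - set xs. w x powr \<beta>) / remaining_weight \<beta> w m xs)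
        = draw_prob \<beta> w m xs"
      by (simp add: remaining_weight_def)
  qed simp
  finally show ?case using Suc by simp
qed

text \<open>Each draw picks i with probability at least its share of the total weight
  w i powr \<beta> / (\<Sum>j<m. w j powr \<beta>), since the remaining weight only decreases.\<close>
lemma prob_not_drawn_le:
  assumes pos: "\<And>i. 0 < w i" and "n \<le> m" and "i < m"
  shows "(\<Sum>xs\<in>draws m n. draw_prob \<beta> w m xs * (if i \<in> set xs then 0 else 1))
           \<le> (1 - w i powr \<beta> / (\<Sum>j<m. w j powr \<beta>)) ^ n"
  using \<open>n \<le> m\<close>
proof (induction n)
  case 0
  have "draws m 0 = {[]}" by (auto simp: draws_def)
  then show ?case by (simp add: draw_prob_def)
next
  case (Suc n)
  define p where "p = w i powr \<beta> / (\<Sum>j<m. w j powr \<beta>)"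
  have p_le_1: "p \<le> 1"
  proof -
    have "\<And>j. 0 < w j powr \<beta>" using pos by (metis powr_gt_zero less_irrefl)
    then show ?thesis
      unfolding p_def using \<open>i < m\<close> by (intro divide_le_eq_1_pos[THEN iffD2] sum_pos member_le_sum) auto
  qed
  have step: "(\<Sum>x\<in>{..<m} - set xs. draw_prob \<beta> w m (xs @ [x]) * (if i \<in> set (xs @ [x]) then 0 else 1))
      \<le> (1 - p) * (draw_prob \<beta> w m xs * (if i \<in> set xs then 0 else 1))"
    if xs: "xs \<in> draws m n" for xs
  proof (cases "i \<in> set xs")
    case False
    define R where "R = remaining_weight \<beta> w m xs"
    have R_pos: "R > 0" unfolding R_def using remaining_weight_pos pos xs Suc.prems by auto
    have i_rem: "i \<in> {..<m} - set xs" using False \<open>i < m\<close> by auto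
    have "(\<Sum>x\<in>{..<m} - set xs. draw_prob \<beta> w m (xs @ [x]) * (if i \<in> set (xs @ [x]) then 0 else 1))
        = (\<Sum>x\<in>({..<m} - set xs) - {i}. draw_prob \<beta> w m xs * (w x powr \<beta> / R))"
      using False by (subst sum.remove[OF _ i_rem]) (auto simp: draw_prob_snoc R_def intro!: sum.cong)
    also have "\<dots> = draw_prob \<beta> w m xs * ((R - w i powr \<beta>) / R)"
      unfolding R_def remaining_weight_def
      by (subst (2) sum.remove[OF _ i_rem]) (simp_all add: sum_distrib_left sum_divide_distrib[symmetric])
    also have "\<dots> = draw_prob \<beta> w m xs * (1 - w i powr \<beta> / R)"
      using R_pos by (simp add: diff_divide_distrib)
    also have "\<dots> \<le> draw_prob \<beta> w m xs * (1 - p)"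
    proof (intro mult_left_mono draw_prob_nonneg diff_left_mono)
      have "R \<le> (\<Sum>j<m. w j powr \<beta>)"
        unfolding R_def remaining_weight_def by (rule sum_mono2) auto
      then show "p \<le> w i powr \<beta> / R"
        unfolding p_def using R_pos by (intro divide_left_mono) auto
    qed
    finally show ?thesis using False by (simp add: mult.commute)
  qed simp
  have "(\<Sum>ys\<in>draws m (Suc n). draw_prob \<beta> w m ys * (if i \<in> set ys then 0 else 1))
      \<le> (1 - p) * (\<Sum>xs\<in>draws m n. draw_prob \<beta> w m xs * (if i \<in> set xs then 0 else 1))"
    unfolding sum_draws_Suc sum_distrib_left by (rule sum_mono) (rule step)
  also have "\<dots> \<le> (1 - p) * (1 - p) ^ n"
    using Suc p_le_1 unfolding p_def by (intro mult_left_mono) auto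
  finally show ?case unfolding p_def by simp
qed

lemma expectation_draws_le_miss_probs:
  fixes g :: "nat list \<Rightarrow> real" and G :: "nat set"
  assumes pos: "\<And>i. 0 < w i" and "n \<le> m" and "G \<subseteq> {..<m}" and "c \<ge> 0"
    and g_01: "\<And>xs. xs \<in> draws m n \<Longrightarrow> 0 \<le> g xs \<and> g xs \<le> 1"
    and g_covered: "\<And>xs. xs \<in> draws m n \<Longrightarrow> G \<subseteq> set xs \<Longrightarrow> g xs \<le> c"
  shows "(\<Sum>xs\<in>draws m n. draw_prob \<beta> w m xs * g xs)
          \<le> c + (\<Sum>i\<in>G. (1 - w i powr \<beta> / (\<Sum>j<m. w j powr \<beta>)) ^ n)"
proof -
  have "finite G" using \<open>G \<subseteq> {..<m}\<close> finite_subset by blast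
  have g_le: "g xs \<le> c + (\<Sum>i\<in>G. (if i \<in> set xs then 0 else 1))" if xs: "xs \<in> draws m n" for xs
  proof (cases "G \<subseteq> set xs")
    case True
    have "0 \<le> (\<Sum>i\<in>G. (if i \<in> set xs then 0 else 1::real))" by (intro sum_nonneg) auto
    then show ?thesis using g_covered[OF xs True] by linarith
  next
    case False
    then obtain i where "i \<in> G" "i \<notin> set xs" by auto
    then have "1 \<le> (\<Sum>i\<in>G. (if i \<in> set xs then 0 else 1::real))"
      using member_le_sum[of i G "\<lambda>i. (if i \<in> set xs then 0 else 1::real)"] \<open>finite G\<close> by auto
    then show ?thesis using g_01[OF xs] \<open>c \<ge> 0\<close> by linarith
  qed
  have "(\<Sum>xs\<in>draws m n. draw_prob \<beta> w m xs * g xs)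
      \<le> (\<Sum>xs\<in>draws m n. draw_prob \<beta> w m xs * (c + (\<Sum>i\<in>G. (if i \<in> set xs then 0 else 1))))"
    by (intro sum_mono mult_left_mono g_le draw_prob_nonneg)
  also have "\<dots> = c * (\<Sum>xs\<in>draws m n. draw_prob \<beta> w m xs)
      + (\<Sum>i\<in>G. \<Sum>xs\<in>draws m n. draw_prob \<beta> w m xs * (if i \<in> set xs then 0 else 1))"
    by (simp add: distrib_left sum.distrib sum_distrib_left sum_distrib_right sum.swap[of _ G] mult.commute)
  also have "\<dots> \<le> c + (\<Sum>i\<in>G. (1 - w i powr \<beta> / (\<Sum>j<m. w j powr \<beta>)) ^ n)"
  proof -
    have "(\<Sum>xs\<in>draws m n. draw_prob \<beta> w m xs * (if i \<in> set xs then 0 else 1))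
        \<le> (1 - w i powr \<beta> / (\<Sum>j<m. w j powr \<beta>)) ^ n" if "i \<in> G" for i
      using prob_not_drawn_le pos \<open>n \<le> m\<close> that \<open>G \<subseteq> {..<m}\<close> by blast
    then show ?thesis using sum_draw_prob pos \<open>n \<le> m\<close> by (simp add: sum_mono)
  qed
  finally show ?thesis .
qed

section \<open>The normalised order statistics\<close>

lemma hatI_distinct_set_length:
  assumes "distinct xs"
  shows "distinct (hatI w xs)" "set (hatI w xs) = set xs" "length (hatI w xs) = length xs"
  using assms by (auto simp: hatI_def distinct_sort)

lemma hatI_nth_0_max:
  assumes "x \<in> set xs"
  shows "w x \<le> w (hatI w xs ! 0)"
proof -
  let ?s = "sort_key w xs"
  have ne: "?s \<noteq> []" using assms by (metis empty_iff list.set(1) set_sort)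
  obtain i where i: "i < length ?s" "?s ! i = x" using assms by (metis in_set_conv_nth set_sort)
  have "hatI w xs ! 0 = ?s ! (length ?s - 1)"
    unfolding hatI_def using ne by (simp add: hd_rev hd_conv_nth[symmetric] last_conv_nth)
  moreover have "w (?s ! i) \<le> w (?s ! (length ?s - 1))"
    using sorted_sort_key[of w xs] i(1) by (auto simp: sorted_iff_nth_mono)
  ultimately show ?thesis using i by simp
qed

lemma sum_hatI_tail:
  assumes "distinct xs" "xs \<noteq> []"
  shows "(\<Sum>k=2..length xs. f (hatI w xs ! (k - 1))) = (\<Sum>x\<in>set xs - {hatI w xs ! 0}. f x)"
proof -
  let ?h = "hatI w xs"
  have d: "distinct ?h" and st: "set ?h = set xs" and l: "length ?h = length xs"
    using hatI_distinct_set_length[OF assms(1)] by auto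
  have "(\<Sum>k=2..length xs. f (?h ! (k - 1))) = (\<Sum>i\<in>{1..<length xs}. f (?h ! i))"
    by (rule sum.reindex_bij_witness[where i="\<lambda>i. i + 1" and j="\<lambda>k. k - 1"]) auto
  also have "\<dots> = (\<Sum>x\<in>(\<lambda>i. ?h ! i) ` {1..<length xs}. f x)"
    by (rule sum.reindex[symmetric, unfolded comp_def])
       (use d l in \<open>auto simp: inj_on_def nth_eq_iff_index_eq\<close>)
  also have "(\<lambda>i. ?h ! i) ` {1..<length xs} = set ?h - {?h ! 0}"
  proof
    show "(!) ?h ` {1..<length xs} \<subseteq> set ?h - {?h ! 0}"
    proof
      fix x assume "x \<in> (!) ?h ` {1..<length xs}"
      then obtain i where i: "1 \<le> i" "i < length ?h" "x = ?h ! i" using l by auto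
      have "0 < length ?h" using i(2) by linarith
      then have "?h ! i \<noteq> ?h ! 0" using nth_eq_iff_index_eq[OF d i(2)] i(1) by auto
      then show "x \<in> set ?h - {?h ! 0}" using i nth_mem[OF i(2)] by auto
    qed
    show "set ?h - {?h ! 0} \<subseteq> (!) ?h ` {1..<length xs}"
    proof
      fix x assume "x \<in> set ?h - {?h ! 0}"
      then obtain i where "i < length xs" "?h ! i = x" "x \<noteq> ?h ! 0"
        using l by (auto simp: in_set_conv_nth)
      then show "x \<in> (!) ?h ` {1..<length xs}" by (cases i) auto
    qed
  qed
  finally show ?thesis using st by simp
qed

lemma eta_tail_sum_le_sq_ratio:
  fixes w :: "nat \<Rightarrow> real"
  assumes pos: "\<And>i. 0 < w i" and "distinct xs" "length xs = N" "b \<ge> 2"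
  shows "(\<Sum>k=2..N. eta w xs k powr b)
           \<le> (\<Sum>x\<in>set xs - {hatI w xs ! 0}. (w x)\<^sup>2) / (\<Sum>x\<in>set xs. w x)\<^sup>2"
proof (cases "xs = []")
  case True
  then show ?thesis using \<open>length xs = N\<close> by simp
next
  case False
  let ?h = "hatI w xs"
  define S where "S = (\<Sum>x\<in>set xs. w x)"
  have S_pos: "S > 0" unfolding S_def using False pos by (intro sum_pos) auto
  have eta_eq: "eta w xs k = w (?h ! (k - 1)) / S" for k
    unfolding eta_def S_def using \<open>distinct xs\<close>
    by (simp add: sum.distinct_set_conv_list sum_list_sum_nth atLeast0LessThan)
  have "(\<Sum>k=2..N. eta w xs k powr b) \<le> (\<Sum>k=2..N. (w (?h ! (k - 1)) / S)\<^sup>2)"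
  proof (rule sum_mono)
    fix k assume k: "k \<in> {2..N}"
    have "k - 1 < length ?h"
      using k hatI_distinct_set_length(3)[OF \<open>distinct xs\<close>] \<open>length xs = N\<close> by auto
    then have "?h ! (k - 1) \<in> set xs"
      using hatI_distinct_set_length(2)[OF \<open>distinct xs\<close>] nth_mem by blast
    then have "w (?h ! (k - 1)) \<le> S"
      unfolding S_def using pos by (intro member_le_sum) (auto intro: less_imp_le)
    then have "(w (?h ! (k - 1)) / S) powr b \<le> (w (?h ! (k - 1)) / S) powr 2"
      using pos S_pos \<open>b \<ge> 2\<close> by (intro powr_mono') (auto intro: less_imp_le)
    also have "\<dots> = (w (?h ! (k - 1)) / S)\<^sup>2"
      using pos S_pos by (subst powr_numeral) (auto intro: divide_nonneg_pos less_imp_le)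
    finally show "eta w xs k powr b \<le> (w (?h ! (k - 1)) / S)\<^sup>2" by (simp add: eta_eq)
  qed
  also have "\<dots> = (\<Sum>x\<in>set xs - {?h ! 0}. (w x)\<^sup>2) / S\<^sup>2"
    using sum_hatI_tail[OF \<open>distinct xs\<close> False, of "\<lambda>x. (w x / S)\<^sup>2" w] \<open>length xs = N\<close>
    by (simp add: power_divide sum_divide_distrib)
  finally show ?thesis unfolding S_def .
qed

lemma sum_squares_le_square_sum:
  fixes f :: "'a \<Rightarrow> real"
  assumes "finite A" "B \<subseteq> A" "\<And>x. x \<in> A \<Longrightarrow> 0 \<le> f x"
  shows "(\<Sum>x\<in>B. (f x)\<^sup>2) \<le> (\<Sum>x\<in>A. f x)\<^sup>2"
proof -
  have "(\<Sum>x\<in>B. (f x)\<^sup>2) \<le> (\<Sum>x\<in>A. (f x)\<^sup>2)"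
    using assms by (intro sum_mono2) auto
  also have "\<dots> \<le> (\<Sum>x\<in>A. f x * (\<Sum>y\<in>A. f y))"
    using assms by (intro sum_mono) (auto simp: power2_eq_square intro!: mult_left_mono member_le_sum)
  also have "\<dots> = (\<Sum>x\<in>A. f x)\<^sup>2" by (simp add: sum_distrib_right power2_eq_square)
  finally show ?thesis .
qed

lemma eta_tail_sum_le_1:
  fixes w :: "nat \<Rightarrow> real"
  assumes pos: "\<And>i. 0 < w i" and "distinct xs" "length xs = N" "b \<ge> 2"
  shows "(\<Sum>k=2..N. eta w xs k powr b) \<le> 1"
proof -
  have "(\<Sum>x\<in>set xs - {hatI w xs ! 0}. (w x)\<^sup>2) / (\<Sum>x\<in>set xs. w x)\<^sup>2 \<le> 1"
    using sum_squares_le_square_sum[of "set xs" "set xs - {hatI w xs ! 0}" w] pos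
    by (simp add: divide_le_eq_1 less_imp_le)
  then show ?thesis using eta_tail_sum_le_sq_ratio[where w=w, OF pos assms(2-4)] by linarith
qed

text \<open>Since the weights decrease, the largest drawn weight is at least w 0, so index 0 never
  contributes to the tail.\<close>
lemma eta_tail_sum_le_weights:
  fixes w :: "nat \<Rightarrow> real"
  assumes dec: "\<And>i j. i < j \<Longrightarrow> w j < w i" and pos: "\<And>i. 0 < w i"
    and xs: "xs \<in> draws m N" and "b \<ge> 2"
  shows "(\<Sum>k=2..N. eta w xs k powr b) \<le> (\<Sum>j\<in>{1..<m}. (w j)\<^sup>2) / (\<Sum>x\<in>set xs. w x)\<^sup>2"
proof -
  let ?t = "hatI w xs ! 0"
  have "set xs - {?t} \<subseteq> {1..<m}"
  proof
    fix x assume x: "x \<in> set xs - {?t}"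
    have "x \<noteq> 0"
    proof
      assume "x = 0"
      then have "w 0 \<le> w ?t" using hatI_nth_0_max[of 0 xs w] x by simp
      moreover have "w ?t < w 0" using dec[of 0 ?t] x \<open>x = 0\<close> by (cases ?t) auto
      ultimately show False by simp
    qed
    then show "x \<in> {1..<m}" using x xs by (auto simp: draws_def)
  qed
  then have "(\<Sum>x\<in>set xs - {?t}. (w x)\<^sup>2) \<le> (\<Sum>j\<in>{1..<m}. (w j)\<^sup>2)"
    by (intro sum_mono2) auto
  then have "(\<Sum>x\<in>set xs - {?t}. (w x)\<^sup>2) / (\<Sum>x\<in>set xs. w x)\<^sup>2
      \<le> (\<Sum>j\<in>{1..<m}. (w j)\<^sup>2) / (\<Sum>x\<in>set xs. w x)\<^sup>2"
    by (intro divide_right_mono) auto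
  with eta_tail_sum_le_sq_ratio[where w=w, OF pos _ _ \<open>b \<ge> 2\<close>] xs show ?thesis
    by (fastforce simp: draws_def)
qed

lemma cond_exp_eta_nonneg: "0 \<le> cond_exp_eta \<gamma> \<beta> b w N"
  unfolding cond_exp_eta_def by (intro sum_nonneg mult_nonneg_nonneg draw_prob_nonneg) auto

lemma cond_exp_eta_le_1:
  fixes w :: "nat \<Rightarrow> real"
  assumes pos: "\<And>i. 0 < w i" and "b \<ge> 2" and "N \<le> n_avail \<gamma> N"
  shows "cond_exp_eta \<gamma> \<beta> b w N \<le> 1"
proof -
  let ?m = "n_avail \<gamma> N"
  have "cond_exp_eta \<gamma> \<beta> b w N \<le> (\<Sum>xs\<in>draws ?m N. draw_prob \<beta> w ?m xs * 1)"
    unfolding cond_exp_eta_def using eta_tail_sum_le_1[where w=w, OF pos _ _ \<open>b \<ge> 2\<close>]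
    by (intro sum_mono mult_left_mono draw_prob_nonneg) (auto simp: draws_def)
  also have "\<dots> = 1" using sum_draw_prob[where w=w, OF pos \<open>N \<le> ?m\<close>] by simp
  finally show ?thesis .
qed

section \<open>Poisson counts of atoms\<close>

lemma is_ppp_atomsD:
  assumes "is_ppp_atoms M w"
  shows "prob_space M"
    and "\<omega> \<in> space M \<Longrightarrow> i < j \<Longrightarrow> w \<omega> j < w \<omega> i"
    and "\<omega> \<in> space M \<Longrightarrow> 0 < w \<omega> i"
  using assms unfolding is_ppp_atoms_def by blast+

lemma ppp_intensity_greaterThan:
  assumes "a > 0"
  shows "ppp_intensity {a<..} = ennreal (1 / a)"
proof -
  have "(\<integral>\<^sup>+x. ennreal (1 / x\<^sup>2) * indicator {a..} x \<partial>lborel) = ennreal (0 - (- 1 / a))"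
  proof (rule nn_integral_FTC_atLeast)
    show "((\<lambda>x::real. - 1 / x) has_real_derivative 1 / x\<^sup>2) (at x)" if "a \<le> x" for x
      using that \<open>a > 0\<close> by (auto intro!: derivative_eq_intros simp: power2_eq_square field_simps)
    show "((\<lambda>x::real. - 1 / x) \<longlongrightarrow> 0) at_top" by real_asymp
  qed auto
  moreover have "(\<integral>\<^sup>+x. ennreal (1 / x\<^sup>2) * indicator {a..} x \<partial>lborel)
      = (\<integral>\<^sup>+x. ennreal (1 / x\<^sup>2) * indicator {a<..} x \<partial>lborel)"
    by (intro nn_integral_cong_AE eventually_mono[OF AE_lborel_singleton[of a]])
       (auto simp: indicator_def)
  ultimately show ?thesis unfolding ppp_intensity_def by simp
qed

lemma ppp_count_greaterThan:
  assumes ppp: "is_ppp_atoms M w" and "a > 0"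
  shows "(\<lambda>\<omega>. ppp_count (w \<omega>) {a<..}) \<in> measurable M (count_space UNIV)"
    and "measure M {\<omega>\<in>space M. ppp_count (w \<omega>) {a<..} = j} = (1/a)^j / fact j * exp (- (1/a))"
proof -
  interpret prob_space M using is_ppp_atomsD(1)[OF ppp] .
  let ?A = "\<lambda>k::nat. {a<..} :: real set"
  have "(\<forall>k<1. ?A k \<in> sets borel \<and> ?A k \<subseteq> {0<..} \<and> ppp_intensity (?A k) < \<infinity>) \<and>
      disjoint_family_on ?A {..<1}"
    using \<open>a > 0\<close> ppp_intensity_greaterThan[OF \<open>a > 0\<close>] by (auto simp: disjoint_family_on_def)
  from ppp[unfolded is_ppp_atoms_def, THEN conjunct2, THEN conjunct2, THEN conjunct2,
      rule_format, OF this]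
  have indep: "indep_vars (\<lambda>_. count_space UNIV) (\<lambda>k \<omega>. ppp_count (w \<omega>) (?A k)) {..<1}"
    and distr: "measure M {\<omega>\<in>space M. ppp_count (w \<omega>) {a<..} = j}
        = enn2real (ppp_intensity {a<..}) ^ j / fact j * exp (- enn2real (ppp_intensity {a<..}))"
    by auto
  show "(\<lambda>\<omega>. ppp_count (w \<omega>) {a<..}) \<in> measurable M (count_space UNIV)"
    using indep unfolding indep_vars_def2 by auto
  show "measure M {\<omega>\<in>space M. ppp_count (w \<omega>) {a<..} = j} = (1/a)^j / fact j * exp (- (1/a))"
    using distr ppp_intensity_greaterThan[OF \<open>a > 0\<close>] \<open>a > 0\<close> by simp
qed

lemma measure_nat_le_eq_sum:
  assumes "prob_space M" and X: "X \<in> measurable M (count_space UNIV)"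
  shows "measure M {\<omega>\<in>space M. X \<omega> \<le> k} = (\<Sum>j\<le>k. measure M {\<omega>\<in>space M. X \<omega> = (j::nat)})"
proof -
  interpret prob_space M by fact
  have "{\<omega>\<in>space M. X \<omega> \<le> k} = (\<Union>j\<in>{..k}. {\<omega>\<in>space M. X \<omega> = j})" by auto
  also have "measure M \<dots> = (\<Sum>j\<le>k. measure M {\<omega>\<in>space M. X \<omega> = j})"
    using X by (intro measure_finite_Union) (auto simp: disjoint_family_on_def emeasure_finite)
  finally show ?thesis .
qed

lemma measure_nat_ge_eq:
  assumes P: "prob_space M" and X: "X \<in> measurable M (count_space UNIV)"
  shows "measure M {\<omega>\<in>space M. k \<le> X \<omega>} = 1 - (\<Sum>j<k. measure M {\<omega>\<in>space M. X \<omega> = (j::nat)})"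
proof (cases k)
  case 0
  then show ?thesis using prob_space.prob_space[OF P] by simp
next
  case (Suc k')
  have "{\<omega>\<in>space M. k \<le> X \<omega>} = space M - {\<omega>\<in>space M. X \<omega> \<le> k'}" using Suc by auto
  moreover have "{\<omega>\<in>space M. X \<omega> \<le> k'} \<in> sets M" using X by measurable
  ultimately have "measure M {\<omega>\<in>space M. k \<le> X \<omega>} = 1 - measure M {\<omega>\<in>space M. X \<omega> \<le> k'}"
    using prob_space.prob_compl[OF P] by simp
  then show ?thesis
    using measure_nat_le_eq_sum[OF P X, of k'] Suc by (simp add: lessThan_Suc_atMost)
qed

lemma power_div_fact_le_exp:
  fixes x :: real
  assumes "x \<ge> 0"
  shows "x ^ n / fact n \<le> exp x"
proof -
  obtain t where t: "exp x = (\<Sum>m<Suc n. x ^ m / fact m) + exp t / fact (Suc n) * x ^ Suc n"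
    using Maclaurin_exp_le[of x "Suc n"] by blast
  have "x ^ n / fact n \<le> (\<Sum>m<Suc n. x ^ m / fact m)"
    using assms by (intro member_le_sum) auto
  also have "\<dots> \<le> exp x" unfolding t using assms by (intro add_increasing2) auto
  finally show ?thesis .
qed

text \<open>The Lagrange remainder of exp is at most its leading term.\<close>
lemma poisson_tail_le:
  fixes \<mu> :: real
  assumes "\<mu> \<ge> 0"
  shows "1 - (\<Sum>j<k. \<mu> ^ j / fact j * exp (- \<mu>)) \<le> \<mu> ^ k / fact k"
proof -
  obtain t where t: "\<bar>t\<bar> \<le> \<bar>\<mu>\<bar>" "exp \<mu> = (\<Sum>m<k. \<mu> ^ m / fact m) + exp t / fact k * \<mu> ^ k"
    using Maclaurin_exp_le[of \<mu> k] by blast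
  have "(\<Sum>j<k. \<mu> ^ j / fact j * exp (- \<mu>)) = exp (- \<mu>) * (exp \<mu> - exp t / fact k * \<mu> ^ k)"
    using t(2) by (simp add: sum_distrib_left mult.commute)
  also have "\<dots> = 1 - exp (t - \<mu>) * (\<mu> ^ k / fact k)"
    by (simp add: algebra_simps exp_diff exp_minus field_simps)
  finally have "1 - (\<Sum>j<k. \<mu> ^ j / fact j * exp (- \<mu>)) = exp (t - \<mu>) * (\<mu> ^ k / fact k)" by simp
  moreover have "exp (t - \<mu>) \<le> 1" using t(1) assms by simp
  ultimately show ?thesis using assms mult_right_mono[of "exp (t - \<mu>)" 1 "\<mu> ^ k / fact k"] by simp
qed

lemma poisson_terms_mono:
  fixes \<mu> :: real
  assumes "i \<le> k" "real k \<le> \<mu>"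
  shows "\<mu> ^ i / fact i \<le> \<mu> ^ k / fact k"
  using assms
proof (induction k)
  case (Suc k)
  show ?case
  proof (cases "i = Suc k")
    case False
    then have "\<mu> ^ i / fact i \<le> \<mu> ^ k / fact k" using Suc by simp
    also have "\<dots> \<le> \<mu> ^ k / fact k * (\<mu> / real (Suc k))"
      using Suc.prems mult_left_mono[of 1 "\<mu> / real (Suc k)" "\<mu> ^ k / fact k"] by simp
    also have "\<dots> = \<mu> ^ Suc k / fact (Suc k)" by (simp add: field_simps)
    finally show ?thesis .
  qed simp
qed simp

lemma poisson_cdf_le:
  fixes \<mu> :: real
  assumes "real k \<le> \<mu>"
  shows "(\<Sum>j\<le>k. \<mu> ^ j / fact j * exp (- \<mu>)) \<le> (real k + 1) * (\<mu> ^ k / fact k) * exp (- \<mu>)"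
proof -
  have "(\<Sum>j\<le>k. \<mu> ^ j / fact j * exp (- \<mu>)) \<le> (\<Sum>j\<le>k. \<mu> ^ k / fact k * exp (- \<mu>))"
    using assms by (intro sum_mono mult_right_mono poisson_terms_mono) auto
  then show ?thesis by (simp add: algebra_simps)
qed

lemma ppp_count_set_measurable:
  assumes "is_ppp_atoms M w" and "a > 0"
  shows "{\<omega>\<in>space M. P (ppp_count (w \<omega>) {a<..})} \<in> sets M"
  using measurable_sets[OF ppp_count_greaterThan(1)[OF assms], of "{n. P n}"]
  by (simp add: vimage_def Int_def conj_commute)

lemma prob_ppp_count_ge_le:
  assumes ppp: "is_ppp_atoms M w" and "a > 0"
  shows "measure M {\<omega>\<in>space M. k \<le> ppp_count (w \<omega>) {a<..}} \<le> (1 / a) ^ k / fact k"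
  using measure_nat_ge_eq[OF is_ppp_atomsD(1)[OF ppp] ppp_count_greaterThan(1)[OF assms], of k]
    ppp_count_greaterThan(2)[OF assms] poisson_tail_le[of "1/a" k] \<open>a > 0\<close>
  by simp

lemma prob_ppp_count_le_le:
  assumes ppp: "is_ppp_atoms M w" and "a > 0" and "real k \<le> 1 / a"
  shows "measure M {\<omega>\<in>space M. ppp_count (w \<omega>) {a<..} \<le> k}
           \<le> (real k + 1) * ((1 / a) ^ k / fact k) * exp (- (1 / a))"
  using measure_nat_le_eq_sum[OF is_ppp_atomsD(1)[OF ppp] ppp_count_greaterThan(1)[OF ppp \<open>a > 0\<close>], of k]
    ppp_count_greaterThan(2)[OF ppp \<open>a > 0\<close>] poisson_cdf_le[OF \<open>real k \<le> 1 / a\<close>]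
  by simp

lemma prob_ppp_count_eq_0:
  assumes ppp: "is_ppp_atoms M w" and "a > 0"
  shows "measure M {\<omega>\<in>space M. ppp_count (w \<omega>) {a<..} \<le> 0} = exp (- (1 / a))"
  using ppp_count_greaterThan(2)[OF assms, of 0] by simp

section \<open>Elementary estimates\<close>

lemma powr_increment_ge:
  fixes x \<beta> :: real
  assumes "x \<ge> 0" "0 < \<beta>" "\<beta> < 1"
  shows "(1 - \<beta>) * (x + 1) powr (- \<beta>) \<le> (x + 1) powr (1 - \<beta>) - x powr (1 - \<beta>)"
proof (cases "x = 0")
  case False
  then have "x > 0" using assms by simp
  have der: "((\<lambda>t. t powr (1 - \<beta>)) has_real_derivative (1 - \<beta>) * t powr (1 - \<beta> - 1)) (at t)"
    if "x \<le> t" "t \<le> x + 1" for t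
    using that \<open>x > 0\<close> by (intro has_real_derivative_powr) auto
  then obtain z where z: "x < z" "z < x + 1"
    "(x + 1) powr (1 - \<beta>) - x powr (1 - \<beta>) = (x + 1 - x) * ((1 - \<beta>) * z powr (1 - \<beta> - 1))"
    using MVT2[of x "x + 1", OF _ der] by auto
  have "(x + 1) powr (- \<beta>) \<le> z powr (- \<beta>)"
    using z \<open>x > 0\<close> assms by (intro powr_mono2') auto
  then show ?thesis using z(3) assms by (simp add: mult_left_mono)
qed (use assms in simp)

lemma sum_powr_neg_le:
  fixes \<beta> :: real
  assumes "0 < \<beta>" "\<beta> < 1"
  shows "(\<Sum>j\<in>{1..n}. real j powr (- \<beta>)) \<le> real n powr (1 - \<beta>) / (1 - \<beta>)"
proof (induction n)
  case (Suc n)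
  have "(real n + 1) powr (- \<beta>)
      \<le> ((real n + 1) powr (1 - \<beta>) - real n powr (1 - \<beta>)) / (1 - \<beta>)"
    using powr_increment_ge[of "real n" \<beta>] assms by (simp add: pos_le_divide_eq mult.commute)
  then have "(real n + 1) powr (- \<beta>)
      \<le> (real n + 1) powr (1 - \<beta>) / (1 - \<beta>) - real n powr (1 - \<beta>) / (1 - \<beta>)"
    by (simp add: diff_divide_distrib)
  then show ?case using Suc by (simp add: add.commute)
qed simp

lemma sum_inverse_squares_le: "(\<Sum>j\<in>{2..n}. 1 / (real j)\<^sup>2) \<le> 1 - 1 / real (max 1 n)"
proof (induction n)
  case (Suc n)
  show ?case
  proof (cases "n = 0")
    case False
    have "real n * (real n + 1) \<le> (real (Suc n))\<^sup>2"
      by (simp add: power2_eq_square algebra_simps)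
    then have "1 / (real (Suc n))\<^sup>2 \<le> 1 / (real n * (real n + 1))"
      using False by (intro divide_left_mono) auto
    also have "\<dots> = 1 / real n - 1 / real (Suc n)"
      using False by (simp add: field_simps)
    finally show ?thesis using Suc False by (simp add: max_def)
  qed simp
qed simp

lemma ln_diff_le_sum_inverse:
  assumes "1 \<le> a" "a \<le> b"
  shows "ln (real b) - ln (real a) \<le> (\<Sum>j\<in>{a..<b}. 1 / real j)"
  using assms(2)
proof (induction b rule: dec_induct)
  case (step n)
  have "n \<ge> 1" using assms(1) step.hyps by simp
  then have "ln (real (Suc n)) - ln (real n) = ln (real (Suc n) / real n)"
    by (simp add: ln_div)
  also have "\<dots> = ln (1 + 1 / real n)" using \<open>n \<ge> 1\<close> by (simp add: field_simps)
  also have "\<dots> \<le> 1 / real n" using \<open>n \<ge> 1\<close> by (intro ln_add_one_self_le_self) auto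
  finally show ?case using step.IH step.hyps by simp
qed simp

lemma geometric_tail_le:
  fixes r :: real
  assumes "0 \<le> r" "r < 1"
  shows "(\<Sum>j\<in>{a..<b}. r ^ j) \<le> r ^ a / (1 - r)"
proof (cases "a \<le> b")
  case True
  have "(\<Sum>j\<in>{a..<b}. r ^ j) = r ^ a * (\<Sum>i<b - a. r ^ i)"
    by (subst sum_distrib_left, rule sum.reindex_bij_witness[where j="\<lambda>j. j - a" and i="\<lambda>i. a + i"])
       (use True in \<open>auto simp: power_add[symmetric]\<close>)
  also have "(\<Sum>i<b - a. r ^ i) = (1 - r ^ (b - a)) / (1 - r)"
    using assms by (simp add: sum_gp_strict)
  also have "\<dots> \<le> 1 / (1 - r)" using assms by (intro divide_right_mono) auto
  finally show ?thesis using assms by (simp add: mult_left_mono)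
qed (use assms in simp)

lemma sum_geometric_from_2_le:
  fixes r :: real
  assumes "0 \<le> r" "r \<le> 1 / 2"
  shows "(\<Sum>j\<in>{2..<m}. r * r ^ j) \<le> 2 * r ^ 3"
proof -
  have "(\<Sum>j\<in>{2..<m}. r * r ^ j) \<le> r * (r ^ 2 / (1 - r))"
    unfolding sum_distrib_left[symmetric] using assms by (intro mult_left_mono geometric_tail_le) auto
  also have "\<dots> \<le> r * (2 * r ^ 2)"
  proof (intro mult_left_mono)
    have "r ^ 2 \<le> 2 * r ^ 2 * (1 - r)"
      using mult_right_mono[of "2 * r" 1 "r ^ 2"] assms by (simp add: algebra_simps)
    then show "r ^ 2 / (1 - r) \<le> 2 * r ^ 2" using assms by (simp add: pos_divide_le_eq)
  qed fact
  finally show ?thesis by (simp add: power_numeral_reduce)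
qed

lemma power_mult_div_fact_le:
  fixes x :: real
  assumes "0 \<le> x" "k \<le> n"
  shows "(real k * x) ^ n / fact n \<le> (exp 1 * x) ^ n"
proof -
  have "(real k * x) ^ n \<le> (real n * x) ^ n"
    using assms by (intro power_mono mult_right_mono) auto
  then have "(real k * x) ^ n / fact n \<le> x ^ n * (real n ^ n / fact n)"
    by (simp add: divide_right_mono power_mult_distrib mult.commute)
  also have "\<dots> \<le> x ^ n * exp (real n)"
    using assms by (intro mult_left_mono power_div_fact_le_exp) auto
  also have "\<dots> = (exp 1 * x) ^ n"
    by (simp add: exp_of_nat_mult[symmetric] power_mult_distrib mult.commute)
  finally show ?thesis .
qed

lemma poisson_cdf_8j_le:
  "(real j + 1) * ((8 * real j) ^ j / fact j) * exp (- (8 * real j)) \<le> (1 / 2) ^ j"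
proof -
  have "(2::real) ^ 7 \<le> exp 1 ^ 7" using exp_ge_add_one_self[of 1] by (intro power_mono) auto
  then have e7: "128 \<le> exp (7::real)" by (simp add: exp_of_nat_mult[symmetric])
  have "(8 * real j) ^ j / fact j \<le> (exp 1 * 8) ^ j"
    using power_mult_div_fact_le[of 8 j j] by (simp add: mult.commute)
  then have "(real j + 1) * ((8 * real j) ^ j / fact j) * exp (- (8 * real j))
      \<le> (real j + 1) * (exp 1 * 8) ^ j * exp (- (8 * real j))"
    by (intro mult_right_mono mult_left_mono) auto
  also have "\<dots> = (real j + 1) * (8 / exp 7) ^ j"
  proof -
    have "exp 1 ^ j * exp (- (8 * real j)) = inverse (exp 7) ^ j"
      by (simp add: exp_of_nat_mult[symmetric] power_inverse exp_add[symmetric] exp_minus[symmetric]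
          mult.commute)
    then show ?thesis by (simp add: power_mult_distrib divide_inverse power_inverse)
  qed
  also have "\<dots> \<le> (real j + 1) * (1 / 16) ^ j"
    using e7 by (intro mult_left_mono power_mono) (auto simp: divide_simps)
  also have "\<dots> \<le> 8 ^ j * (1 / 16) ^ j"
  proof (intro mult_right_mono)
    show "real j + 1 \<le> 8 ^ j"
      by (induction j) (auto intro: order_trans[OF _ one_le_power[of 8]])
  qed simp
  also have "\<dots> = (1 / 2) ^ j" by (simp add: power_mult_distrib[symmetric])
  finally show ?thesis .
qed

lemma one_minus_power_le_exp:
  fixes p q :: real
  assumes "q \<le> p" "p \<le> 1"
  shows "(1 - p) ^ N \<le> exp (- real N * q)"
proof -
  have "(1 - p) ^ N \<le> exp (- q) ^ N"
    using assms exp_ge_add_one_self[of "- q"] by (intro power_mono) auto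
  then show ?thesis by (simp add: exp_of_nat_mult[symmetric] mult.commute)
qed

section \<open>The tail sum for a fixed configuration\<close>

text \<open>For strictly decreasing weights the atoms above a form an initial segment of the indices.\<close>
lemma less_weight_iff_less_ppp_count:
  fixes W :: "nat \<Rightarrow> real"
  assumes dec: "\<And>i j. i < j \<Longrightarrow> W j < W i" and fin: "finite {i. a < W i}"
  shows "a < W j \<longleftrightarrow> j < ppp_count W {a<..}"
proof -
  let ?S = "{i. a < W i}"
  have W_antimono: "W j \<le> W i" if "i \<le> j" for i j
    using dec[of i j] that by (cases "i = j") auto
  have count: "ppp_count W {a<..} = card ?S" by (simp add: ppp_count_def)
  show ?thesis
  proof
    assume "a < W j"
    then have "{..j} \<subseteq> ?S" using W_antimono by (auto intro: order.strict_trans2)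
    then have "card {..j} \<le> card ?S" using fin by (rule card_mono[rotated])
    then show "j < ppp_count W {a<..}" using count by simp
  next
    assume j: "j < ppp_count W {a<..}"
    show "a < W j"
    proof (rule ccontr)
      assume "\<not> a < W j"
      have "?S \<subseteq> {..<j}"
      proof
        fix i assume "i \<in> ?S"
        then show "i \<in> {..<j}" using W_antimono[of j i] \<open>\<not> a < W j\<close> by (cases "j \<le> i") auto
      qed
      then have "card ?S \<le> j" using card_mono[of "{..<j}" ?S] by simp
      then show False using j count by simp
    qed
  qed
qed

lemma finite_weights_above:
  fixes W :: "nat \<Rightarrow> real"
  assumes "0 < ppp_count W {a0<..}" "a0 \<le> a"
  shows "finite {i. a < W i}"
proof (rule finite_subset)
  show "finite {i. a0 < W i}" using assms(1) card.infinite by (force simp: ppp_count_def)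
  show "{i. a < W i} \<subseteq> {i. a0 < W i}" using assms(2) by auto
qed

lemma sum_powr_weights_le:
  fixes W :: "nat \<Rightarrow> real"
  assumes dec: "\<And>i j. i < j \<Longrightarrow> W j < W i" and pos: "\<And>i. 0 < W i"
    and "0 < \<beta>" "\<beta> < 1" "2 \<le> m" "A > 0"
    and W0: "W 0 \<le> B" and W_upper: "\<And>j. j \<in> {2..<m} \<Longrightarrow> W j \<le> 2 * A / real j"
  shows "(\<Sum>j<m. W j powr \<beta>) \<le> 2 * B powr \<beta> + (2 * A) powr \<beta> * real m powr (1 - \<beta>) / (1 - \<beta>)"
proof -
  have "{..<m} = {0, 1} \<union> {2..<m}" using \<open>2 \<le> m\<close> by auto
  then have "(\<Sum>j<m. W j powr \<beta>) = W 0 powr \<beta> + W 1 powr \<beta> + (\<Sum>j\<in>{2..<m}. W j powr \<beta>)"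
    by (simp add: sum.union_disjoint)
  also have "W 0 powr \<beta> \<le> B powr \<beta>"
    using W0 pos[of 0] \<open>0 < \<beta>\<close> by (intro powr_mono2) auto
  also have "W 1 powr \<beta> \<le> B powr \<beta>"
    using W0 dec[of 0 1] pos[of 1] \<open>0 < \<beta>\<close> by (intro powr_mono2) auto
  also have "(\<Sum>j\<in>{2..<m}. W j powr \<beta>) \<le> (\<Sum>j\<in>{2..<m}. (2 * A) powr \<beta> * real j powr (- \<beta>))"
  proof (rule sum_mono)
    fix j assume j: "j \<in> {2..<m}"
    have "W j powr \<beta> \<le> (2 * A / real j) powr \<beta>"
      using W_upper[OF j] pos[of j] \<open>0 < \<beta>\<close> by (intro powr_mono2) auto
    also have "\<dots> = (2 * A) powr \<beta> * real j powr (- \<beta>)"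
      using \<open>A > 0\<close> j by (simp add: powr_divide powr_minus_divide)
    finally show "W j powr \<beta> \<le> (2 * A) powr \<beta> * real j powr (- \<beta>)" .
  qed
  also have "(\<Sum>j\<in>{2..<m}. (2 * A) powr \<beta> * real j powr (- \<beta>))
      \<le> (2 * A) powr \<beta> * (\<Sum>j\<in>{1..m}. real j powr (- \<beta>))"
    by (subst sum_distrib_left[symmetric], intro mult_left_mono sum_mono2) auto
  also have "(\<Sum>j\<in>{1..m}. real j powr (- \<beta>)) \<le> real m powr (1 - \<beta>) / (1 - \<beta>)"
    using sum_powr_neg_le \<open>0 < \<beta>\<close> \<open>\<beta> < 1\<close> .
  finally show ?thesis by (simp add: mult_left_mono)
qed

lemma sum_sq_weights_le:
  fixes W :: "nat \<Rightarrow> real"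
  assumes pos: "\<And>i. 0 < W i" and "2 \<le> m"
    and W_upper: "\<And>j. j \<in> {2..<m} \<Longrightarrow> W j \<le> 2 * A / real j"
  shows "(\<Sum>j\<in>{1..<m}. (W j)\<^sup>2) \<le> (W 1)\<^sup>2 + 4 * A\<^sup>2"
proof -
  have "{1..<m} = {1} \<union> {2..<m}" using \<open>2 \<le> m\<close> by auto
  then have "(\<Sum>j\<in>{1..<m}. (W j)\<^sup>2) = (W 1)\<^sup>2 + (\<Sum>j\<in>{2..<m}. (W j)\<^sup>2)"
    by (simp add: sum.union_disjoint)
  also have "(\<Sum>j\<in>{2..<m}. (W j)\<^sup>2) \<le> (\<Sum>j\<in>{2..<m}. 4 * A\<^sup>2 * (1 / (real j)\<^sup>2))"
  proof (rule sum_mono)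
    fix j assume j: "j \<in> {2..<m}"
    have "(W j)\<^sup>2 \<le> (2 * A / real j)\<^sup>2"
      using W_upper[OF j] pos[of j] by (intro power_mono) (auto intro: less_imp_le)
    then show "(W j)\<^sup>2 \<le> 4 * A\<^sup>2 * (1 / (real j)\<^sup>2)" by (simp add: power_divide)
  qed
  also have "\<dots> \<le> 4 * A\<^sup>2 * 1"
  proof -
    have "{2..<m} = {2..m - 1}" using \<open>2 \<le> m\<close> by auto
    then have "(\<Sum>j\<in>{2..<m}. 1 / (real j)\<^sup>2) \<le> 1 - 1 / real (max 1 (m - 1))"
      using sum_inverse_squares_le[of "m - 1"] by simp
    moreover have "0 \<le> 1 / real (max 1 (m - 1))" by simp
    ultimately have "(\<Sum>j\<in>{2..<m}. 1 / (real j)\<^sup>2) \<le> 1" by linarith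
    then show ?thesis by (subst sum_distrib_left[symmetric]) (intro mult_left_mono, auto)
  qed
  finally show ?thesis by simp
qed
text \<open>The J heaviest indices are all drawn except with probability J exp(-N q); once they are,
  the total drawn weight is at least s.\<close>
lemma draw_expectation_le_of_weight_bounds:
  fixes W :: "nat \<Rightarrow> real"
  assumes dec: "\<And>i j. i < j \<Longrightarrow> W j < W i" and pos: "\<And>i. 0 < W i"
    and "b \<ge> 2" "0 < \<beta>" "\<beta> < 1" "N \<le> m" "A > 0"
    and J: "1 \<le> J0" "J0 < J" "J \<le> m"
    and W0: "W 0 \<le> B"
    and W_upper: "\<And>j. j \<in> {2..<m} \<Longrightarrow> W j \<le> 2 * A / real j"
    and W_lower: "\<And>j. j \<in> {J0..<J} \<Longrightarrow> 1 / (8 * real j) < W j"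
  defines "s \<equiv> \<Sum>j\<in>{J0..<J}. 1 / (8 * real j)"
    and "D \<equiv> 2 * B powr \<beta> + (2 * A) powr \<beta> * real m powr (1 - \<beta>) / (1 - \<beta>)"
  shows "(\<Sum>xs\<in>draws m N. draw_prob \<beta> W m xs * (\<Sum>k=2..N. eta W xs k powr b))
     \<le> min 1 ((W 1)\<^sup>2 / s\<^sup>2) + 4 * A\<^sup>2 / s\<^sup>2
        + real J * exp (- real N * ((1 / (8 * real J)) powr \<beta> / D))"
proof -
  define F where "F xs = (\<Sum>k=2..N. eta W xs k powr b)" for xs
  define Q where "Q = (\<Sum>j\<in>{1..<m}. (W j)\<^sup>2)"
  define q where "q = (1 / (8 * real J)) powr \<beta> / D"
  have "2 \<le> m" using J by simp
  have s_pos: "0 < s" unfolding s_def using J by (intro sum_pos) auto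
  have Dtot_le: "(\<Sum>j<m. W j powr \<beta>) \<le> D"
    unfolding D_def
    by (rule sum_powr_weights_le[where W=W, OF dec pos \<open>0 < \<beta>\<close> \<open>\<beta> < 1\<close> \<open>2 \<le> m\<close> \<open>A > 0\<close> W0 W_upper])
  have "\<And>j. 0 < W j powr \<beta>" using pos by (metis powr_gt_zero less_irrefl)
  then have Dtot_pos: "0 < (\<Sum>j<m. W j powr \<beta>)" using \<open>2 \<le> m\<close> by (intro sum_pos) (auto simp: lessThan_empty_iff)
  have covered: "F xs \<le> min 1 (Q / s\<^sup>2)" if xs: "xs \<in> draws m N" and "{..<J} \<subseteq> set xs" for xs
  proof -
    have "s \<le> (\<Sum>j\<in>{J0..<J}. W j)" unfolding s_def using W_lower by (intro sum_mono) (auto intro: less_imp_le)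
    also have "\<dots> \<le> (\<Sum>x\<in>set xs. W x)"
      using \<open>{..<J} \<subseteq> set xs\<close> pos by (intro sum_mono2) (auto intro: less_imp_le)
    finally have "Q / (\<Sum>x\<in>set xs. W x)\<^sup>2 \<le> Q / s\<^sup>2"
      unfolding Q_def using s_pos by (intro divide_left_mono sum_nonneg mult_pos_pos power_mono) auto
    moreover have "F xs \<le> Q / (\<Sum>x\<in>set xs. W x)\<^sup>2"
      unfolding F_def Q_def by (rule eta_tail_sum_le_weights[where w=W, OF dec pos xs \<open>b \<ge> 2\<close>])
    moreover have "F xs \<le> 1"
      unfolding F_def using xs \<open>b \<ge> 2\<close> by (intro eta_tail_sum_le_1[where w=W, OF pos]) (auto simp: draws_def)
    ultimately show ?thesis by simp
  qed
  have miss: "(1 - W i powr \<beta> / (\<Sum>j<m. W j powr \<beta>)) ^ N \<le> exp (- real N * q)" if "i < J" for i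
  proof (rule one_minus_power_le_exp)
    have "W (J - 1) \<le> W i"
      using dec[of i "J - 1"] \<open>i < J\<close> by (cases "i = J - 1") (auto simp: less_imp_le)
    moreover have "1 / (8 * real J) \<le> 1 / (8 * real (J - 1))" using J by (intro divide_left_mono) auto
    moreover have "1 / (8 * real (J - 1)) < W (J - 1)" using W_lower[of "J - 1"] J by simp
    ultimately have "1 / (8 * real J) \<le> W i" by (meson le_less_trans less_le_trans less_imp_le)
    then have "q \<le> W i powr \<beta> / D"
      unfolding q_def using \<open>0 < \<beta>\<close> Dtot_le Dtot_pos by (intro divide_right_mono powr_mono2) auto
    also have "\<dots> \<le> W i powr \<beta> / (\<Sum>j<m. W j powr \<beta>)"
      using Dtot_le Dtot_pos by (intro divide_left_mono mult_pos_pos) auto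
    finally show "q \<le> W i powr \<beta> / (\<Sum>j<m. W j powr \<beta>)" .
    show "W i powr \<beta> / (\<Sum>j<m. W j powr \<beta>) \<le> 1"
      using Dtot_pos \<open>i < J\<close> J by (intro divide_le_eq_1_pos[THEN iffD2] member_le_sum) auto
  qed
  have "(\<Sum>xs\<in>draws m N. draw_prob \<beta> W m xs * F xs)
      \<le> min 1 (Q / s\<^sup>2) + (\<Sum>i\<in>{..<J}. (1 - W i powr \<beta> / (\<Sum>j<m. W j powr \<beta>)) ^ N)"
  proof (rule expectation_draws_le_miss_probs[where w=W, OF pos \<open>N \<le> m\<close>])
    show "{..<J} \<subseteq> {..<m}" using J by auto
    show "0 \<le> min 1 (Q / s\<^sup>2)" unfolding Q_def by (simp add: sum_nonneg)
    show "0 \<le> F xs \<and> F xs \<le> 1" if "xs \<in> draws m N" for xs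
      unfolding F_def using that \<open>b \<ge> 2\<close>
      by (auto simp: draws_def intro!: sum_nonneg eta_tail_sum_le_1[where w=W, OF pos])
  qed (rule covered)
  also have "\<dots> \<le> min 1 (Q / s\<^sup>2) + real J * exp (- real N * q)"
    using sum_mono[of "{..<J}", OF miss] by simp
  also have "min 1 (Q / s\<^sup>2) \<le> min 1 ((W 1)\<^sup>2 / s\<^sup>2) + 4 * A\<^sup>2 / s\<^sup>2"
  proof -
    have "Q / s\<^sup>2 \<le> (W 1)\<^sup>2 / s\<^sup>2 + 4 * A\<^sup>2 / s\<^sup>2"
      using sum_sq_weights_le[OF pos \<open>2 \<le> m\<close> W_upper] s_pos unfolding Q_def
      by (simp add: add_divide_distrib[symmetric] divide_right_mono)
    moreover have "0 \<le> 4 * A\<^sup>2 / s\<^sup>2" by simp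
    ultimately show ?thesis unfolding min_def by (split if_split)+ linarith
  qed
  finally show ?thesis unfolding F_def q_def by simp
qed

lemma min_sq_ratio_le_layers:
  fixes x s :: real
  assumes "0 < x" "0 < s"
  shows "min 1 (x\<^sup>2 / s\<^sup>2) \<le> 1 / s\<^sup>2
     + (\<Sum>k<K. exp (2 * real k + 2) / s\<^sup>2 * (if exp (real k) < x then 1 else 0))
     + (if exp (real K) < x then 1 else 0)"
proof -
  define T where "T = (\<Sum>k<K. exp (2 * real k + 2) / s\<^sup>2 * (if exp (real k) < x then 1 else 0::real))"
  have "0 \<le> T" unfolding T_def by (intro sum_nonneg) auto
  consider "x \<le> 1" | "exp (real K) < x" | "1 < x" "x \<le> exp (real K)" by linarith
  then have "min 1 (x\<^sup>2 / s\<^sup>2) \<le> 1 / s\<^sup>2 + T + (if exp (real K) < x then 1 else 0)"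
  proof cases
    case 1
    then have "x\<^sup>2 / s\<^sup>2 \<le> 1 / s\<^sup>2"
      using \<open>0 < x\<close> by (intro divide_right_mono power_le_one) auto
    then show ?thesis using \<open>0 \<le> T\<close> by (simp add: min_def)
  next
    case 2
    then have "(if exp (real K) < x then 1 else 0) = (1::real)" by simp
    moreover have "0 \<le> 1 / s\<^sup>2" by simp
    ultimately show ?thesis using \<open>0 \<le> T\<close> min.cobounded1[of 1 "x\<^sup>2 / s\<^sup>2"] by linarith
  next
    case 3
    text \<open>x lies in the layer (exp k, exp (k + 1)] with k = \<lceil>ln x\<rceil> - 1 < K.\<close>
    define k where "k = nat \<lceil>ln x\<rceil> - 1"
    have "0 < ln x" using 3 by simp
    moreover have "ln x \<le> real K" using 3 \<open>0 < x\<close> by (metis ln_exp ln_le_cancel_iff exp_gt_zero)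
    ultimately have k: "k < K" "real k < ln x" "ln x \<le> real k + 1"
      unfolding k_def by (auto simp: ceiling_le_iff) linarith+
    have "exp (real k) < x" using k(2) \<open>0 < x\<close> by (metis exp_less_mono exp_ln)
    have "x\<^sup>2 \<le> (exp (real k + 1))\<^sup>2"
      using k(3) \<open>0 < x\<close> by (intro power_mono) (auto, metis exp_le_cancel_iff exp_ln)
    also have "\<dots> = exp (2 * real k + 2)" by (simp add: power2_eq_square exp_add[symmetric])
    finally have "x\<^sup>2 / s\<^sup>2 \<le> exp (2 * real k + 2) / s\<^sup>2 * (if exp (real k) < x then 1 else 0)"
      using \<open>exp (real k) < x\<close> by (simp add: divide_right_mono)
    also have "\<dots> \<le> T"
      unfolding T_def using k(1)
      by (intro member_le_sum[of k "{..<K}"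
            "\<lambda>k. exp (2 * real k + 2) / s\<^sup>2 * (if exp (real k) < x then 1 else 0::real)"]) auto
    finally have "x\<^sup>2 / s\<^sup>2 \<le> T" .
    moreover have "0 \<le> 1 / s\<^sup>2" "0 \<le> (if exp (real K) < x then 1 else 0::real)" by simp_all
    ultimately show ?thesis using min.cobounded2[of 1 "x\<^sup>2 / s\<^sup>2"] by linarith
  qed
  then show ?thesis unfolding T_def .
qed

text \<open>In terms of the decreasing weights: some weight exceeds 1/(8m), W 0 \<le> B, W j \<le> 2A/j
  for 2 \<le> j < m, and W j > 1/(8j) for J0 \<le> j < J.\<close>
definition typical_config :: "(nat \<Rightarrow> real) \<Rightarrow> real \<Rightarrow> real \<Rightarrow> nat \<Rightarrow> nat \<Rightarrow> nat \<Rightarrow> bool" where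
  "typical_config W A B m J0 J \<longleftrightarrow>
     0 < ppp_count W {1 / (8 * real m)<..} \<and> ppp_count W {B<..} = 0 \<and>
     (\<forall>j\<in>{2..<m}. ppp_count W {2 * A / real j<..} \<le> j) \<and>
     (\<forall>j\<in>{J0..<J}. j < ppp_count W {1 / (8 * real j)<..})"

lemma typical_config_weights:
  fixes W :: "nat \<Rightarrow> real"
  assumes dec: "\<And>i j. i < j \<Longrightarrow> W j < W i" and typical: "typical_config W A B m J0 J"
    and "1 \<le> A" "1 \<le> B" "1 \<le> J0" "J \<le> m"
  shows "1 / (8 * real m) \<le> a \<Longrightarrow> a < W j \<longleftrightarrow> j < ppp_count W {a<..}"
    and "W 0 \<le> B"
    and "j \<in> {2..<m} \<Longrightarrow> W j \<le> 2 * A / real j"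
    and "j \<in> {J0..<J} \<Longrightarrow> 1 / (8 * real j) < W j"
proof -
  show iff: "a < W j \<longleftrightarrow> j < ppp_count W {a<..}" if "1 / (8 * real m) \<le> a" for a j
    using typical that by (intro less_weight_iff_less_ppp_count[OF dec] finite_weights_above)
      (auto simp: typical_config_def)
  have "1 / (8 * real m) \<le> 1" by (cases "m = 0") auto
  then have "1 / (8 * real m) \<le> B" using \<open>1 \<le> B\<close> by linarith
  then show "W 0 \<le> B" using iff[of B 0] typical by (auto simp: typical_config_def)
  show "W j \<le> 2 * A / real j" if "j \<in> {2..<m}"
  proof -
    have "1 / (8 * real m) \<le> 2 * A / real m" using \<open>1 \<le> A\<close> by (cases "m = 0") (auto simp: divide_simps)
    also have "\<dots> \<le> 2 * A / real j" using that \<open>1 \<le> A\<close> by (intro divide_left_mono) auto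
    finally have "2 * A / real j < W j \<longleftrightarrow> j < ppp_count W {2 * A / real j<..}" by (rule iff)
    moreover have "ppp_count W {2 * A / real j<..} \<le> j"
      using typical that unfolding typical_config_def by blast
    ultimately show ?thesis by linarith
  qed
  show "1 / (8 * real j) < W j" if "j \<in> {J0..<J}"
  proof -
    have "1 / (8 * real m) \<le> 1 / (8 * real j)" using that \<open>1 \<le> J0\<close> \<open>J \<le> m\<close> by (intro divide_left_mono) auto
    then show ?thesis using iff[of "1 / (8 * real j)" j] typical that by (auto simp: typical_config_def)
  qed
qed

lemma cond_exp_eta_le_of_typical_config:
  fixes W :: "nat \<Rightarrow> real"
  assumes dec: "\<And>i j. i < j \<Longrightarrow> W j < W i" and pos: "\<And>i. 0 < W i"
    and "b \<ge> 2" "0 < \<beta>" "\<beta> < 1" "N \<le> n_avail \<gamma> N" "1 \<le> A" "1 \<le> B"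
    and J: "1 \<le> J0" "J0 < J" "J \<le> n_avail \<gamma> N"
    and typical: "typical_config W A B (n_avail \<gamma> N) J0 J"
  defines "s \<equiv> \<Sum>j\<in>{J0..<J}. 1 / (8 * real j)"
    and "D \<equiv> 2 * B powr \<beta> + (2 * A) powr \<beta> * real (n_avail \<gamma> N) powr (1 - \<beta>) / (1 - \<beta>)"
  shows "cond_exp_eta \<gamma> \<beta> b W N \<le> real J * exp (- real N * ((1 / (8 * real J)) powr \<beta> / D))
     + 4 * A\<^sup>2 / s\<^sup>2 + 1 / s\<^sup>2
     + (\<Sum>k<K. exp (2 * real k + 2) / s\<^sup>2 * (if 2 \<le> ppp_count W {exp (real k)<..} then 1 else 0))
     + (if 2 \<le> ppp_count W {exp (real K)<..} then 1 else 0)"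
proof -
  let ?m = "n_avail \<gamma> N"
  note weights = typical_config_weights[OF dec typical \<open>1 \<le> A\<close> \<open>1 \<le> B\<close> \<open>1 \<le> J0\<close> \<open>J \<le> ?m\<close>]
  have s_pos: "0 < s" unfolding s_def using J by (intro sum_pos) auto
  have "exp (real k) < W 1 \<longleftrightarrow> 2 \<le> ppp_count W {exp (real k)<..}" for k
  proof -
    have "1 / (8 * real ?m) \<le> 1" by (cases "?m = 0") auto
    then have "1 / (8 * real ?m) \<le> exp (real k)" using one_le_exp_iff[of "real k"] by linarith
    then show ?thesis using weights(1)[of "exp (real k)" 1] by linarith
  qed
  then have "min 1 ((W 1)\<^sup>2 / s\<^sup>2) \<le> 1 / s\<^sup>2
     + (\<Sum>k<K. exp (2 * real k + 2) / s\<^sup>2 * (if 2 \<le> ppp_count W {exp (real k)<..} then 1 else 0))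
     + (if 2 \<le> ppp_count W {exp (real K)<..} then 1 else 0)"
    using min_sq_ratio_le_layers[OF pos[of 1] s_pos, of K] by simp
  moreover have "cond_exp_eta \<gamma> \<beta> b W N \<le> min 1 ((W 1)\<^sup>2 / s\<^sup>2) + 4 * A\<^sup>2 / s\<^sup>2
      + real J * exp (- real N * ((1 / (8 * real J)) powr \<beta> / D))"
    unfolding cond_exp_eta_def s_def D_def
    by (rule draw_expectation_le_of_weight_bounds[OF dec pos \<open>b \<ge> 2\<close> \<open>0 < \<beta>\<close> \<open>\<beta> < 1\<close>
          \<open>N \<le> ?m\<close> _ J weights(2-4)]) (use \<open>1 \<le> A\<close> in auto)
  ultimately show ?thesis by linarith
qed

section \<open>Averaging over the point process\<close>

lemma integral_le_measure_add_integral: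
  fixes f h :: "'a \<Rightarrow> real"
  assumes "prob_space M" "E \<in> sets M" "integrable M h"
    and "\<And>\<omega>. \<omega> \<in> space M \<Longrightarrow> f \<omega> \<le> 1" "\<And>\<omega>. \<omega> \<in> space M \<Longrightarrow> 0 \<le> h \<omega>"
    and "\<And>\<omega>. \<omega> \<in> space M - E \<Longrightarrow> f \<omega> \<le> h \<omega>"
  shows "(\<integral>\<omega>. f \<omega> \<partial>M) \<le> measure M E + (\<integral>\<omega>. h \<omega> \<partial>M)"
proof -
  interpret prob_space M by fact
  have int_E: "integrable M (indicator E :: 'a \<Rightarrow> real)"
    using \<open>E \<in> sets M\<close> by (rule integrable_real_indicator) (simp add: less_top[symmetric])
  have "measure M E + (\<integral>\<omega>. h \<omega> \<partial>M) = (\<integral>\<omega>. indicator E \<omega> + h \<omega> \<partial>M)"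
    using int_E \<open>integrable M h\<close> \<open>E \<in> sets M\<close> by simp
  moreover have "0 \<le> (\<integral>\<omega>. indicator E \<omega> + h \<omega> \<partial>M)"
    using assms(5) by (intro integral_nonneg_AE AE_I2) auto
  moreover have "(\<integral>\<omega>. f \<omega> \<partial>M) \<le> (\<integral>\<omega>. indicator E \<omega> + h \<omega> \<partial>M)" if "integrable M f"
    using that Bochner_Integration.integrable_add[OF int_E \<open>integrable M h\<close>] assms(4-6)
    by (intro integral_mono) (auto simp: indicator_def intro: add_increasing2)
  ultimately show ?thesis using not_integrable_integral_eq[of M f] by fastforce
qed

lemma prob_not_typical_config_le:
  assumes ppp: "is_ppp_atoms M w" and "exp 1 \<le> A" "1 \<le> B" "1 \<le> J0" "J0 < J" "J \<le> m"
  shows "measure M {\<omega>\<in>space M. \<not> typical_config (w \<omega>) A B m J0 J}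
           \<le> exp (- (8 * real m)) + 1 / B + 2 * (exp 1 / (2 * A)) ^ 3 + 2 * (1 / 2) ^ J0"
proof -
  interpret prob_space M using is_ppp_atomsD(1)[OF ppp] .
  define cnt where "cnt a \<omega> = ppp_count (w \<omega>) {a<..}" for a \<omega>
  define Z where "Z = {\<omega>\<in>space M. cnt (1 / (8 * real m)) \<omega> \<le> 0}"
  define E0 where "E0 = {\<omega>\<in>space M. 1 \<le> cnt B \<omega>}"
  define Up where "Up j = {\<omega>\<in>space M. j < cnt (2 * A / real j) \<omega>}" for j
  define Lo where "Lo j = {\<omega>\<in>space M. cnt (1 / (8 * real j)) \<omega> \<le> j}" for j
  define r where "r = exp 1 / (2 * A)"
  have "A > 0" using \<open>exp 1 \<le> A\<close> by (smt (verit) exp_gt_zero)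
  have "0 \<le> r" "r \<le> 1 / 2" unfolding r_def using \<open>exp 1 \<le> A\<close> \<open>A > 0\<close> by (auto simp: field_simps)
  have sets: "Z \<in> events" "E0 \<in> events" "\<And>j. j \<in> {2..<m} \<Longrightarrow> Up j \<in> events"
      "\<And>j. j \<in> {J0..<J} \<Longrightarrow> Lo j \<in> events"
    unfolding Z_def E0_def Up_def Lo_def cnt_def
    using \<open>A > 0\<close> \<open>1 \<le> B\<close> \<open>1 \<le> J0\<close> \<open>J \<le> m\<close> \<open>J0 < J\<close>
    by (auto intro!: ppp_count_set_measurable[OF ppp])
  have "{\<omega>\<in>space M. \<not> typical_config (w \<omega>) A B m J0 J}
      = Z \<union> E0 \<union> (\<Union>j\<in>{2..<m}. Up j) \<union> (\<Union>j\<in>{J0..<J}. Lo j)"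
    unfolding Z_def E0_def Up_def Lo_def cnt_def typical_config_def by (auto simp: not_le not_less)
  also have "measure M \<dots> \<le> prob Z + prob E0 + (\<Sum>j\<in>{2..<m}. prob (Up j)) + (\<Sum>j\<in>{J0..<J}. prob (Lo j))"
    using sets measure_Un_le finite_measure_subadditive_finite[of "{2..<m}" Up]
      finite_measure_subadditive_finite[of "{J0..<J}" Lo]
    by (smt (verit, best) finite_atLeastLessThan image_subset_iff sets.Un sets.finite_UN)
  also have "prob Z = exp (- (8 * real m))"
    unfolding Z_def cnt_def using prob_ppp_count_eq_0[OF ppp, of "1 / (8 * real m)"] \<open>J \<le> m\<close> \<open>J0 < J\<close>
    by simp
  also have "prob E0 \<le> 1 / B"
    unfolding E0_def cnt_def using prob_ppp_count_ge_le[OF ppp, of B 1] \<open>1 \<le> B\<close> by simp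
  also have "(\<Sum>j\<in>{2..<m}. prob (Up j)) \<le> (\<Sum>j\<in>{2..<m}. r * r ^ j)"
  proof (rule sum_mono)
    fix j assume j: "j \<in> {2..<m}"
    have "prob (Up j) \<le> (real j * (1 / (2 * A))) ^ (j + 1) / fact (j + 1)"
      unfolding Up_def cnt_def using prob_ppp_count_ge_le[OF ppp, of "2 * A / real j" "j + 1"] j \<open>A > 0\<close>
      by (simp add: Suc_le_eq field_simps)
    also have "\<dots> \<le> r * r ^ j"
      unfolding r_def using power_mult_div_fact_le[of "1 / (2 * A)" j "j + 1"] \<open>A > 0\<close> by simp
    finally show "prob (Up j) \<le> r * r ^ j" .
  qed
  also have "\<dots> \<le> 2 * r ^ 3" by (rule sum_geometric_from_2_le[OF \<open>0 \<le> r\<close> \<open>r \<le> 1 / 2\<close>])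
  also have "(\<Sum>j\<in>{J0..<J}. prob (Lo j)) \<le> (\<Sum>j\<in>{J0..<J}. (1 / 2) ^ j)"
  proof (rule sum_mono)
    fix j assume j: "j \<in> {J0..<J}"
    then show "prob (Lo j) \<le> (1 / 2) ^ j"
      unfolding Lo_def cnt_def
      using prob_ppp_count_le_le[OF ppp, of "1 / (8 * real j)" j] poisson_cdf_8j_le[of j] \<open>1 \<le> J0\<close>
      by simp
  qed
  also have "\<dots> \<le> 2 * (1 / 2) ^ J0" using geometric_tail_le[of "1 / 2 :: real" J0 J] by simp
  finally show ?thesis unfolding r_def by simp
qed

lemma prob_two_atoms_above_exp:
  assumes "is_ppp_atoms M w"
  shows "measure M {\<omega>\<in>space M. 2 \<le> ppp_count (w \<omega>) {exp (real k)<..}} \<le> exp (- (2 * real k)) / 2"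
proof -
  have "(1 / exp (real k)) ^ 2 / fact 2 = exp (- (2 * real k)) / 2"
    by (simp add: power2_eq_square exp_minus inverse_eq_divide exp_add[symmetric])
  then show ?thesis using prob_ppp_count_ge_le[OF assms, of "exp (real k)" 2] by simp
qed

lemma integral_cond_exp_eta_le:
  fixes M :: "'a measure" and w :: "'a \<Rightarrow> nat \<Rightarrow> real" and A B :: real and J0 J K :: nat
  assumes ppp: "is_ppp_atoms M w" and "b \<ge> 2" "0 < \<beta>" "\<beta> < 1" "N \<le> n_avail \<gamma> N"
    and "exp 1 \<le> A" "1 \<le> B" and J: "1 \<le> J0" "J0 < J" "J \<le> n_avail \<gamma> N"
  defines "s \<equiv> \<Sum>j\<in>{J0..<J}. 1 / (8 * real j)"
    and "D \<equiv> 2 * B powr \<beta> + (2 * A) powr \<beta> * real (n_avail \<gamma> N) powr (1 - \<beta>) / (1 - \<beta>)"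
  shows "(\<integral>\<omega>. cond_exp_eta \<gamma> \<beta> b (w \<omega>) N \<partial>M)
     \<le> exp (- (8 * real (n_avail \<gamma> N))) + 1 / B + 2 * (exp 1 / (2 * A)) ^ 3 + 2 * (1 / 2) ^ J0
       + (real J * exp (- real N * ((1 / (8 * real J)) powr \<beta> / D)) + 4 * A\<^sup>2 / s\<^sup>2 + 1 / s\<^sup>2)
       + real K * exp 2 / (2 * s\<^sup>2) + exp (- (2 * real K)) / 2"
proof -
  interpret prob_space M using is_ppp_atomsD(1)[OF ppp] .
  let ?m = "n_avail \<gamma> N"
  define E where "E = {\<omega>\<in>space M. \<not> typical_config (w \<omega>) A B ?m J0 J}"
  define Lay where "Lay k = {\<omega>\<in>space M. 2 \<le> ppp_count (w \<omega>) {exp (real k)<..}}" for k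
  define C where "C = real J * exp (- real N * ((1 / (8 * real J)) powr \<beta> / D)) + 4 * A\<^sup>2 / s\<^sup>2 + 1 / s\<^sup>2"
  define c where "c k = exp (2 * real k + 2) / s\<^sup>2" for k
  define h where "h \<omega> = C + (\<Sum>k<K. c k * indicator (Lay k) \<omega>) + indicator (Lay K) \<omega>" for \<omega>
  have "1 \<le> A" using \<open>exp 1 \<le> A\<close> one_le_exp_iff[of 1] by linarith
  have Lay: "Lay k \<in> events" for k
    unfolding Lay_def by (rule ppp_count_set_measurable[OF ppp]) simp
  have E: "E \<in> events"
    unfolding E_def typical_config_def using J \<open>1 \<le> A\<close> \<open>1 \<le> B\<close>
    by (intro sets.sets_Collect_neg sets.sets_Collect_conj sets.sets_Collect_finite_All
        ppp_count_set_measurable[OF ppp]) auto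
  have ind: "integrable M (indicator (Lay k) :: 'a \<Rightarrow> real)" for k
    using Lay by (rule integrable_real_indicator) (simp add: less_top[symmetric])
  have "(\<integral>\<omega>. cond_exp_eta \<gamma> \<beta> b (w \<omega>) N \<partial>M) \<le> prob E + (\<integral>\<omega>. h \<omega> \<partial>M)"
  proof (rule integral_le_measure_add_integral[OF prob_space_axioms E])
    show "integrable M h" unfolding h_def
      by (intro Bochner_Integration.integrable_add Bochner_Integration.integrable_sum
          Bochner_Integration.integrable_mult_right integrable_const ind)
    show "cond_exp_eta \<gamma> \<beta> b (w \<omega>) N \<le> 1" if "\<omega> \<in> space M" for \<omega>
      using is_ppp_atomsD(3)[OF ppp that] assms by (intro cond_exp_eta_le_1) auto
    show "0 \<le> h \<omega>" for \<omega>
      unfolding h_def C_def c_def by (intro add_nonneg_nonneg sum_nonneg mult_nonneg_nonneg) auto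
    show "cond_exp_eta \<gamma> \<beta> b (w \<omega>) N \<le> h \<omega>" if \<omega>: "\<omega> \<in> space M - E" for \<omega>
    proof -
      have typical: "typical_config (w \<omega>) A B ?m J0 J" using \<omega> unfolding E_def by blast
      have dec: "\<And>i j. i < j \<Longrightarrow> w \<omega> j < w \<omega> i" and pos: "\<And>i. 0 < w \<omega> i"
        using is_ppp_atomsD(2,3)[OF ppp] \<omega> by auto
      from cond_exp_eta_le_of_typical_config[of "w \<omega>", OF dec pos
          \<open>b \<ge> 2\<close> \<open>0 < \<beta>\<close> \<open>\<beta> < 1\<close> \<open>N \<le> ?m\<close> \<open>1 \<le> A\<close> \<open>1 \<le> B\<close> J typical]
      moreover have "indicator (Lay k) \<omega> = (if 2 \<le> ppp_count (w \<omega>) {exp (real k)<..} then 1 else 0::real)"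
        for k using \<omega> by (simp add: Lay_def)
      ultimately show ?thesis unfolding h_def C_def c_def s_def D_def by presburger
    qed
  qed
  also have "(\<integral>\<omega>. h \<omega> \<partial>M) = C + (\<Sum>k<K. c k * prob (Lay k)) + prob (Lay K)"
  proof -
    have int_sum: "integrable M (\<lambda>\<omega>. \<Sum>k<K. c k * indicator (Lay k) \<omega>)"
      by (intro Bochner_Integration.integrable_sum Bochner_Integration.integrable_mult_right ind)
    have "(\<integral>\<omega>. h \<omega> \<partial>M)
        = (\<integral>\<omega>. C \<partial>M) + (\<integral>\<omega>. (\<Sum>k<K. c k * indicator (Lay k) \<omega>) \<partial>M)
          + (\<integral>\<omega>. indicator (Lay K) \<omega> \<partial>M)"
      unfolding h_def using int_sum ind
      by (simp add: Bochner_Integration.integral_add Bochner_Integration.integrable_add)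
    also have "(\<integral>\<omega>. (\<Sum>k<K. c k * indicator (Lay k) \<omega>) \<partial>M) = (\<Sum>k<K. c k * prob (Lay k))"
      using ind Lay by (subst Bochner_Integration.integral_sum) (auto simp: Int_absorb2 sets.sets_into_space)
    finally show ?thesis using Lay[of K] by (simp add: prob_space Int_absorb2 sets.sets_into_space)
  qed
  also have "(\<Sum>k<K. c k * prob (Lay k)) \<le> (\<Sum>k<K. c k * (exp (- (2 * real k)) / 2))"
    unfolding Lay_def c_def by (intro sum_mono mult_left_mono prob_two_atoms_above_exp[OF ppp]) auto
  also have "\<dots> = real K * exp 2 / (2 * s\<^sup>2)"
    unfolding c_def by (simp add: exp_add[symmetric] field_simps)
  also have "prob (Lay K) \<le> exp (- (2 * real K)) / 2"
    unfolding Lay_def by (rule prob_two_atoms_above_exp[OF ppp])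
  also have "prob E \<le> exp (- (8 * real ?m)) + 1 / B + 2 * (exp 1 / (2 * A)) ^ 3 + 2 * (1 / 2) ^ J0"
    unfolding E_def using J assms by (intro prob_not_typical_config_le[OF ppp]) auto
  finally show ?thesis unfolding C_def by simp
qed

section \<open>Choice of parameters\<close>

definition window_lower :: "real \<Rightarrow> real \<Rightarrow> real" where
  "window_lower \<epsilon> x = (1/8) * (ln (x powr \<epsilon> - 1) - ln (x powr (\<epsilon>/2)))"

text \<open>The bound of integral_cond_exp_eta_le for A = e (ln x)^(2/5), B = (ln x)^2,
  J = \<lfloor>x^\<epsilon>\<rfloor>, J0 = \<lfloor>x^(\<epsilon>/2)\<rfloor> and K = \<lceil>ln ln x\<rceil>, with the floors and ceilings removed.\<close>
definition majorant :: "real \<Rightarrow> real \<Rightarrow> real \<Rightarrow> real \<Rightarrow> real \<Rightarrow> real \<Rightarrow> real \<Rightarrow> real" where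
  "majorant \<epsilon> \<beta> \<kappa> u c d x =
     exp (- (8 * x)) + 1 / ln x powr 2 + 2 * (exp 1 / (2 * (exp 1 * ln x powr (2/5)))) ^ 3
     + 2 * (1/2) powr (x powr (\<epsilon>/2) - 1)
     + x powr \<epsilon> * exp (- (c * (x powr \<kappa> * x powr u)
          / (2 * ln x powr (2 * \<beta>) + d * ln x powr (2 / 5 * \<beta>) * x powr u)))
     + (4 * (exp 1 * ln x powr (2/5))\<^sup>2 / (window_lower \<epsilon> x)\<^sup>2 + 1 / (window_lower \<epsilon> x)\<^sup>2)
     + (ln (ln x) + 1) * exp 2 / (2 * (window_lower \<epsilon> x)\<^sup>2)
     + exp (- (2 * ln (ln x))) / 2"

lemma window_sum_ge:
  fixes x \<epsilon> :: real
  assumes "1 \<le> x" "0 < \<epsilon>" "x powr (\<epsilon>/2) < x powr \<epsilon> - 1"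
  defines "J0 \<equiv> nat \<lfloor>x powr (\<epsilon>/2)\<rfloor>" and "J \<equiv> nat \<lfloor>x powr \<epsilon>\<rfloor>"
  shows "1 \<le> J0" "J0 < J" "0 < window_lower \<epsilon> x"
    and "window_lower \<epsilon> x \<le> (\<Sum>j\<in>{J0..<J}. 1 / (8 * real j))"
proof -
  have "1 \<le> x powr (\<epsilon>/2)" using assms by (intro ge_one_powr_ge_zero) auto
  then have J0: "real J0 \<le> x powr (\<epsilon>/2)" "x powr (\<epsilon>/2) - 1 < real J0"
    unfolding J0_def by linarith+
  have J: "real J \<le> x powr \<epsilon>" "x powr \<epsilon> - 1 < real J"
    unfolding J_def using \<open>1 \<le> x\<close> by (simp_all add: of_nat_floor)
  show "1 \<le> J0" using \<open>1 \<le> x powr (\<epsilon>/2)\<close> unfolding J0_def by linarith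
  show "J0 < J" using J0 J assms(3) by linarith
  show "0 < window_lower \<epsilon> x"
  proof -
    have "0 < x powr (\<epsilon>/2)" using \<open>1 \<le> x\<close> by simp
    moreover have "0 < x powr \<epsilon> - 1" using assms(3) calculation by linarith
    ultimately have "ln (x powr (\<epsilon>/2)) < ln (x powr \<epsilon> - 1)"
      using ln_less_cancel_iff assms(3) by blast
    then show ?thesis unfolding window_lower_def by simp
  qed
  have "ln (x powr \<epsilon> - 1) - ln (x powr (\<epsilon>/2)) \<le> ln (real J) - ln (real J0)"
    using J0 J assms(3) \<open>1 \<le> J0\<close> \<open>1 \<le> x\<close> by (intro diff_mono) (subst ln_le_cancel_iff; auto)+
  also have "\<dots> \<le> (\<Sum>j\<in>{J0..<J}. 1 / real j)"
    using \<open>1 \<le> J0\<close> \<open>J0 < J\<close> by (intro ln_diff_le_sum_inverse) auto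
  finally have "(1/8) * (ln (x powr \<epsilon> - 1) - ln (x powr (\<epsilon>/2))) \<le> (1/8) * (\<Sum>j\<in>{J0..<J}. 1 / real j)"
    by (rule mult_left_mono) simp
  then show "window_lower \<epsilon> x \<le> (\<Sum>j\<in>{J0..<J}. 1 / (8 * real j))"
    unfolding window_lower_def by (simp add: sum_distrib_left)
qed

lemma n_avail_bounds:
  assumes "1 \<le> \<gamma>" "1 \<le> N"
  shows "real N \<le> real (n_avail \<gamma> N)" "real (n_avail \<gamma> N) \<le> 2 * real N powr \<gamma>"
proof -
  have "real N \<le> real N powr \<gamma>" using assms powr_mono[of 1 \<gamma> "real N"] by simp
  then show "real N \<le> real (n_avail \<gamma> N)" "real (n_avail \<gamma> N) \<le> 2 * real N powr \<gamma>"
    unfolding n_avail_def using assms by linarith+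
qed

lemma miss_term_le:
  fixes x \<beta> \<gamma> \<epsilon> :: real and m J :: nat
  assumes "1 \<le> x" "1 \<le> ln x" "0 < \<beta>" "\<beta> < 1" "real m \<le> 2 * x powr \<gamma>" "0 < J" "real J \<le> x powr \<epsilon>"
  defines "D \<equiv> 2 * (ln x powr 2) powr \<beta>
      + (2 * (exp 1 * ln x powr (2/5))) powr \<beta> * real m powr (1 - \<beta>) / (1 - \<beta>)"
    and "u \<equiv> \<gamma> * (1 - \<beta>)" and "\<kappa> \<equiv> 1 - \<epsilon> * \<beta> - \<gamma> * (1 - \<beta>)"
    and "c \<equiv> (1/8) powr \<beta>" and "d \<equiv> (2 * exp 1) powr \<beta> * 2 powr (1 - \<beta>) / (1 - \<beta>)"
  shows "real J * exp (- x * ((1 / (8 * real J)) powr \<beta> / D))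
    \<le> x powr \<epsilon> * exp (- (c * (x powr \<kappa> * x powr u)
          / (2 * ln x powr (2 * \<beta>) + d * ln x powr (2 / 5 * \<beta>) * x powr u)))"
proof -
  define D' where "D' = 2 * ln x powr (2 * \<beta>) + d * ln x powr (2 / 5 * \<beta>) * x powr u"
  have "0 < x" using \<open>1 \<le> x\<close> by simp
  have D_pos: "0 < D"
    unfolding D_def using \<open>1 \<le> ln x\<close> \<open>\<beta> < 1\<close> by (intro add_pos_nonneg divide_nonneg_pos) auto
  have "D \<le> D'"
  proof -
    have "real m powr (1 - \<beta>) \<le> (2 * x powr \<gamma>) powr (1 - \<beta>)"
      using \<open>real m \<le> 2 * x powr \<gamma>\<close> \<open>\<beta> < 1\<close> by (intro powr_mono2) auto
    also have "\<dots> = 2 powr (1 - \<beta>) * x powr u"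
      unfolding u_def using \<open>0 < x\<close> by (simp add: powr_mult powr_powr)
    finally have "(2 * (exp 1 * ln x powr (2/5))) powr \<beta> * real m powr (1 - \<beta>) / (1 - \<beta>)
        \<le> (2 * exp 1) powr \<beta> * ln x powr (2 / 5 * \<beta>) * (2 powr (1 - \<beta>) * x powr u) / (1 - \<beta>)"
      using \<open>1 \<le> ln x\<close> \<open>\<beta> < 1\<close>
      by (simp add: powr_mult powr_powr mult.assoc divide_right_mono mult_left_mono)
    moreover have "(ln x powr 2) powr \<beta> = ln x powr (2 * \<beta>)" by (rule powr_powr)
    ultimately show ?thesis unfolding D_def D'_def d_def by (simp add: field_simps)
  qed
  have "c * x powr (- (\<epsilon> * \<beta>)) \<le> (1 / (8 * real J)) powr \<beta>"
  proof -
    have "(1 / (8 * x powr \<epsilon>)) powr \<beta> \<le> (1 / (8 * real J)) powr \<beta>"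
      using \<open>real J \<le> x powr \<epsilon>\<close> \<open>0 < J\<close> \<open>0 < \<beta>\<close> \<open>0 < x\<close>
      by (intro powr_mono2 divide_left_mono) auto
    moreover have "(1 / (8 * x powr \<epsilon>)) powr \<beta> = c * x powr (- (\<epsilon> * \<beta>))"
      unfolding c_def using \<open>0 < x\<close> by (simp add: powr_divide powr_mult powr_powr powr_minus_divide)
    ultimately show ?thesis by simp
  qed
  moreover have "x * x powr (- (\<epsilon> * \<beta>)) = x powr \<kappa> * x powr u"
    unfolding \<kappa>_def u_def using \<open>0 < x\<close> by (simp add: powr_add[symmetric] powr_mult_base)
  ultimately have "c * (x powr \<kappa> * x powr u) / D' \<le> x * ((1 / (8 * real J)) powr \<beta> / D)"
  proof -
    assume le: "c * x powr (- (\<epsilon> * \<beta>)) \<le> (1 / (8 * real J)) powr \<beta>"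
      and eq: "x * x powr (- (\<epsilon> * \<beta>)) = x powr \<kappa> * x powr u"
    have "c * (x powr \<kappa> * x powr u) / D' \<le> c * (x powr \<kappa> * x powr u) / D"
      using \<open>D \<le> D'\<close> D_pos unfolding c_def by (intro divide_left_mono) auto
    also have "\<dots> = x * (c * x powr (- (\<epsilon> * \<beta>))) / D" by (simp add: eq[symmetric] algebra_simps)
    also have "\<dots> \<le> x * (1 / (8 * real J)) powr \<beta> / D"
      using le \<open>0 < x\<close> D_pos by (intro divide_right_mono mult_left_mono) auto
    finally show ?thesis by simp
  qed
  then have "exp (- x * ((1 / (8 * real J)) powr \<beta> / D)) \<le> exp (- (c * (x powr \<kappa> * x powr u) / D'))"
    by simp
  then show ?thesis
    unfolding D'_def using \<open>real J \<le> x powr \<epsilon>\<close> by (intro mult_mono) auto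
qed

lemma integral_cond_exp_eta_le_majorant:
  fixes M :: "'a measure" and w :: "'a \<Rightarrow> nat \<Rightarrow> real" and \<gamma> \<beta> b \<epsilon> :: real and N :: nat
  assumes ppp: "is_ppp_atoms M w" and "b \<ge> 2" and "0 < \<beta>" "\<beta> < 1" and "1 \<le> \<gamma>"
    and "0 < \<epsilon>" "\<epsilon> \<le> 1"
    and L: "1 \<le> ln (real N)" and window: "real N powr (\<epsilon>/2) < real N powr \<epsilon> - 1"
  shows "(\<integral>\<omega>. cond_exp_eta \<gamma> \<beta> b (w \<omega>) N \<partial>M)
     \<le> majorant \<epsilon> \<beta> (1 - \<epsilon> * \<beta> - \<gamma> * (1 - \<beta>)) (\<gamma> * (1 - \<beta>)) ((1/8) powr \<beta>)
          ((2 * exp 1) powr \<beta> * 2 powr (1 - \<beta>) / (1 - \<beta>)) (real N)"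
proof -
  define x where "x = real N"
  define A where "A = exp 1 * ln x powr (2/5)"
  define B where "B = ln x powr 2"
  define J0 where "J0 = nat \<lfloor>x powr (\<epsilon>/2)\<rfloor>"
  define J where "J = nat \<lfloor>x powr \<epsilon>\<rfloor>"
  define K where "K = nat \<lceil>ln (ln x)\<rceil>"
  define s where "s = (\<Sum>j\<in>{J0..<J}. 1 / (8 * real j))"
  define m where "m = n_avail \<gamma> N"
  have "1 \<le> N" using L by (cases N) auto
  then have "1 \<le> x" unfolding x_def by simp
  have m: "x \<le> real m" "real m \<le> 2 * x powr \<gamma>"
    unfolding m_def x_def using n_avail_bounds[OF \<open>1 \<le> \<gamma>\<close> \<open>1 \<le> N\<close>] by auto
  have J0J: "1 \<le> J0" "J0 < J" and s: "0 < window_lower \<epsilon> x" "window_lower \<epsilon> x \<le> s"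
    using window_sum_ge[OF \<open>1 \<le> x\<close> \<open>0 < \<epsilon>\<close>] window unfolding J0_def J_def s_def x_def by auto
  have J_le: "real J \<le> x powr \<epsilon>" unfolding J_def using \<open>1 \<le> x\<close> by (simp add: of_nat_floor)
  moreover have "x powr \<epsilon> \<le> x" using \<open>1 \<le> x\<close> \<open>\<epsilon> \<le> 1\<close> powr_mono[of \<epsilon> 1 x] by simp
  ultimately have "J \<le> m" using m by linarith
  have "1 \<le> ln x powr (2/5)" using L unfolding x_def by (intro ge_one_powr_ge_zero) auto
  then have "exp 1 \<le> A" unfolding A_def by simp
  have "1 \<le> B" unfolding B_def using L unfolding x_def by (intro ge_one_powr_ge_zero) auto
  have "0 \<le> ln (ln x)" using L unfolding x_def by simp
  then have K: "ln (ln x) \<le> real K" "real K \<le> ln (ln x) + 1"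
    unfolding K_def by linarith+
  have "(\<integral>\<omega>. cond_exp_eta \<gamma> \<beta> b (w \<omega>) N \<partial>M)
     \<le> exp (- (8 * real m)) + 1 / B + 2 * (exp 1 / (2 * A)) ^ 3 + 2 * (1 / 2) ^ J0
       + (real J * exp (- real N * ((1 / (8 * real J)) powr \<beta>
             / (2 * B powr \<beta> + (2 * A) powr \<beta> * real m powr (1 - \<beta>) / (1 - \<beta>))))
          + 4 * A\<^sup>2 / s\<^sup>2 + 1 / s\<^sup>2)
       + real K * exp 2 / (2 * s\<^sup>2) + exp (- (2 * real K)) / 2"
    unfolding s_def m_def using assms \<open>exp 1 \<le> A\<close> \<open>1 \<le> B\<close> J0J \<open>J \<le> m\<close> m
    by (intro integral_cond_exp_eta_le) (auto simp: m_def x_def)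
  also have "exp (- (8 * real m)) \<le> exp (- (8 * x))" using m by simp
  also have "(1 / 2::real) ^ J0 \<le> (1/2) powr (x powr (\<epsilon>/2) - 1)"
  proof -
    have "x powr (\<epsilon>/2) - 1 \<le> real J0" unfolding J0_def by linarith
    then show ?thesis by (simp add: powr_realpow[symmetric] powr_mono')
  qed
  also have "real J * exp (- real N * ((1 / (8 * real J)) powr \<beta>
             / (2 * B powr \<beta> + (2 * A) powr \<beta> * real m powr (1 - \<beta>) / (1 - \<beta>))))
      \<le> x powr \<epsilon> * exp (- ((1/8) powr \<beta> * (x powr (1 - \<epsilon> * \<beta> - \<gamma> * (1 - \<beta>)) * x powr (\<gamma> * (1 - \<beta>)))
          / (2 * ln x powr (2 * \<beta>) + (2 * exp 1) powr \<beta> * 2 powr (1 - \<beta>) / (1 - \<beta>)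
               * ln x powr (2 / 5 * \<beta>) * x powr (\<gamma> * (1 - \<beta>)))))"
    unfolding x_def A_def B_def
    by (rule miss_term_le) (use \<open>1 \<le> x\<close> L assms m J0J J_le in \<open>auto simp: x_def\<close>)
  also have "4 * A\<^sup>2 / s\<^sup>2 \<le> 4 * A\<^sup>2 / (window_lower \<epsilon> x)\<^sup>2"
    using s by (intro divide_left_mono power_mono mult_pos_pos) auto
  also have "1 / s\<^sup>2 \<le> 1 / (window_lower \<epsilon> x)\<^sup>2"
    using s by (intro divide_left_mono power_mono mult_pos_pos) auto
  also have "real K * exp 2 / (2 * s\<^sup>2) \<le> (ln (ln x) + 1) * exp 2 / (2 * (window_lower \<epsilon> x)\<^sup>2)"
    using s K by (intro frac_le mult_right_mono mult_left_mono power_mono mult_pos_pos) auto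
  also have "exp (- (2 * real K)) / 2 \<le> exp (- (2 * ln (ln x))) / 2" using K by simp
  finally show ?thesis unfolding majorant_def A_def B_def x_def by simp
qed

lemma tendsto_ln_mult_majorant:
  fixes \<epsilon> \<beta> \<kappa> u c d :: real
  assumes "\<epsilon> > 0" "\<beta> > 0" "\<kappa> > 0" "u > 0" "c > 0" "d > 0"
  shows "((\<lambda>x. ln x * majorant \<epsilon> \<beta> \<kappa> u c d x) \<longlongrightarrow> 0) at_top"
proof -
  have "((\<lambda>x::real. ln x * exp (- (8 * x))) \<longlongrightarrow> 0) at_top"
    and "((\<lambda>x::real. ln x * (1 / ln x powr 2)) \<longlongrightarrow> 0) at_top"
    and "((\<lambda>x::real. ln x * (2 * (exp 1 / (2 * (exp 1 * ln x powr (2/5)))) ^ 3)) \<longlongrightarrow> 0) at_top"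
    and "((\<lambda>x::real. ln x * (2 * (1/2) powr (x powr (\<epsilon>/2) - 1))) \<longlongrightarrow> 0) at_top"
    and "((\<lambda>x::real. ln x * (x powr \<epsilon> * exp (- (c * (x powr \<kappa> * x powr u)
          / (2 * ln x powr (2 * \<beta>) + d * ln x powr (2 / 5 * \<beta>) * x powr u))))) \<longlongrightarrow> 0) at_top"
    and "((\<lambda>x::real. ln x * (4 * (exp 1 * ln x powr (2/5))\<^sup>2 / (window_lower \<epsilon> x)\<^sup>2
          + 1 / (window_lower \<epsilon> x)\<^sup>2)) \<longlongrightarrow> 0) at_top"
    and "((\<lambda>x::real. ln x * ((ln (ln x) + 1) * exp 2 / (2 * (window_lower \<epsilon> x)\<^sup>2))) \<longlongrightarrow> 0) at_top"
    and "((\<lambda>x::real. ln x * (exp (- (2 * ln (ln x))) / 2)) \<longlongrightarrow> 0) at_top"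
    using assms unfolding window_lower_def by real_asymp+
  then have "((\<lambda>x. ln x * majorant \<epsilon> \<beta> \<kappa> u c d x) \<longlongrightarrow> 0 + 0 + 0 + 0 + 0 + 0 + 0 + 0) at_top"
    unfolding majorant_def distrib_left by (intro tendsto_add)
  then show ?thesis by simp
qed

lemma eventually_window_conditions:
  assumes "0 < \<epsilon>"
  shows "eventually (\<lambda>N. 1 \<le> ln (real N) \<and> real N powr (\<epsilon>/2) < real N powr \<epsilon> - 1) sequentially"
proof -
  have "eventually (\<lambda>x::real. 1 \<le> ln x) at_top"
    and "eventually (\<lambda>x::real. x powr (\<epsilon>/2) < x powr \<epsilon> - 1) at_top"
    using assms by real_asymp+
  then have "eventually (\<lambda>x::real. 1 \<le> ln x \<and> x powr (\<epsilon>/2) < x powr \<epsilon> - 1) at_top"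
    by (rule eventually_conj)
  then show ?thesis by (rule eventually_compose_filterlim[OF _ filterlim_real_sequentially])
qed

theorem lemma6p6:
  fixes M :: "'a measure" and w :: "'a \<Rightarrow> nat \<Rightarrow> real"
    and \<gamma> \<beta> b :: real
  assumes "\<gamma> > 1" and "0 < \<beta>" and "\<beta> < 1"
    and "1 - 1 / \<gamma> < \<beta>"
    and "is_ppp_atoms M w"
    and "b \<ge> 2"
  shows "(\<lambda>N. ln (real N) * (\<integral>\<omega>. cond_exp_eta \<gamma> \<beta> b (w \<omega>) N \<partial>M))
           \<longlonglongrightarrow> 0"
proof -
  define \<epsilon> where "\<epsilon> = (1 - \<gamma> * (1 - \<beta>)) / 2"
  text \<open>\<beta> > 1 - 1/\<gamma> means \<gamma> (1 - \<beta>) < 1, which leaves room for \<epsilon> > 0 and makes the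
    exponent \<kappa> = \<epsilon> (2 - \<beta>) of the miss term positive.\<close>
  have "0 < \<gamma> * (1 - \<beta>)" "\<gamma> * (1 - \<beta>) < 1" using assms(1-4) by (simp_all add: field_simps)
  then have "0 < \<epsilon>" "\<epsilon> \<le> 1" unfolding \<epsilon>_def by auto
  have "1 - \<epsilon> * \<beta> - \<gamma> * (1 - \<beta>) = \<epsilon> * (2 - \<beta>)" unfolding \<epsilon>_def by (simp add: field_simps)
  then have "0 < 1 - \<epsilon> * \<beta> - \<gamma> * (1 - \<beta>)" using \<open>0 < \<epsilon>\<close> assms(3) by simp
  define G where "G = (\<lambda>x. ln x * majorant \<epsilon> \<beta> (1 - \<epsilon> * \<beta> - \<gamma> * (1 - \<beta>)) (\<gamma> * (1 - \<beta>))
      ((1/8) powr \<beta>) ((2 * exp 1) powr \<beta> * 2 powr (1 - \<beta>) / (1 - \<beta>)) x)"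
  have "(G \<longlongrightarrow> 0) at_top"
    unfolding G_def using assms \<open>0 < \<epsilon>\<close> \<open>0 < 1 - \<epsilon> * \<beta> - \<gamma> * (1 - \<beta>)\<close>
    by (intro tendsto_ln_mult_majorant) auto
  then have G_lim: "(\<lambda>N. G (real N)) \<longlonglongrightarrow> 0" by (rule filterlim_compose[OF _ filterlim_real_sequentially])
  have "eventually (\<lambda>N. ln (real N) * (\<integral>\<omega>. cond_exp_eta \<gamma> \<beta> b (w \<omega>) N \<partial>M) \<le> G (real N)) sequentially"
    using eventually_window_conditions[OF \<open>0 < \<epsilon>\<close>]
    by eventually_elim (use assms \<open>0 < \<epsilon>\<close> \<open>\<epsilon> \<le> 1\<close> in
        \<open>auto simp: G_def intro!: mult_left_mono integral_cond_exp_eta_le_majorant\<close>)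
  moreover have "0 \<le> ln (real N) * (\<integral>\<omega>. cond_exp_eta \<gamma> \<beta> b (w \<omega>) N \<partial>M)" for N
    by (intro mult_nonneg_nonneg integral_nonneg_AE AE_I2 cond_exp_eta_nonneg) (cases N, auto)
  ultimately show ?thesis by (intro tendsto_sandwich[OF _ _ tendsto_const G_lim]) simp_all
qed

end
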